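(* Let $k\ge 1$ and $r\ge 2$ be integers and let $d_1\ge d_2\ge\cdots\ge d_k$ be positive integers. Then for all sufficiently large $n$, $$ex^{lin}_r\Big(n,\bigcup_{i=1}^k S^+_{d_i}\Big)\le \max_{1\le i\le k}\left\{\Big(\frac{d_i-1}{r}+\frac{i-1}{r-1}\Big)(n-i+1)+\frac{\binom{i-1}{2}}{\binom{r}{2}}\right\}.$$ Moreover, this bound is sharp asymptotically.
   Context: An $r$-uniform hypergraph is linear if every two of its hyperedges share at most one vertex. For a linear $r$-uniform hypergraph $F$, $ex^{lin}_r(n,F)$ is the maximum number of hyperedges in an $n$-vertex $r$-uniform linear hypergraph containing no copy of $F$ as a subhypergraph. $S_\ell$ denotes the star $K_{1,\ell}$ with $\ell$ edges. For a graph $F$ and $r\ge 2$, the expansion $F^+$ is the $r$-uniform hypergraph obtained from $F$ by adding $r-2$ new vertices to each edge, all added vertices being distinct. $\bigcup_{i=1}^k S^+_{d_i}$ denotes the vertex-disjoint union of $S^+_{d_1},\dots,S^+_{d_k}$. *)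

theory Defs
  imports Complex_Main
begin

definition linear_uniform :: "nat \<Rightarrow> 'a set \<Rightarrow> 'a set set \<Rightarrow> bool" where
  "linear_uniform r V H \<longleftrightarrow> finite V \<and> (\<forall>e\<in>H. e \<subseteq> V \<and> card e = r) \<and>
     (\<forall>e1\<in>H. \<forall>e2\<in>H. e1 \<noteq> e2 \<longrightarrow> card (e1 \<inter> e2) \<le> 1)"

definition contains_copy :: "'a set set \<Rightarrow> 'b set set \<Rightarrow> bool" where
  "contains_copy H F \<longleftrightarrow> (\<exists>f. inj_on f (\<Union>F) \<and> (\<forall>e\<in>F. f ` e \<in> H))"

definition ex_lin :: "nat \<Rightarrow> nat \<Rightarrow> 'b set set \<Rightarrow> nat" where
  "ex_lin r n F = Max {card H | H :: nat set set. linear_uniform r {..<n} H \<and> \<not> contains_copy H F}"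

text \<open>The j-th hyperedge of the expanded star in component i: centre (i,0,0), leaf (i,j,0),
  and r-2 new vertices (i,j,t), 1 \<le> t \<le> r-2.\<close>
definition star_edge :: "nat \<Rightarrow> nat \<Rightarrow> nat \<Rightarrow> (nat \<times> nat \<times> nat) set" where
  "star_edge r i j = {(i,0,0), (i,j,0)} \<union> {(i,j,t) | t. 1 \<le> t \<and> t \<le> r - 2}"

definition star_forest_plus :: "nat \<Rightarrow> nat \<Rightarrow> (nat \<Rightarrow> nat) \<Rightarrow> (nat \<times> nat \<times> nat) set set" where
  "star_forest_plus r k d = {star_edge r i j | i j. 1 \<le> i \<and> i \<le> k \<and> 1 \<le> j \<and> j \<le> d i}"

end

theory Submission
  imports Defs "HOL-Computational_Algebra.Primes" "HOL-Library.Disjoint_Sets"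
begin

text \<open>
  Containing a copy of \<open>S\<^sup>+\<^sub>d\<^sub>1 \<union> \<dots> \<union> S\<^sup>+\<^sub>d\<^sub>k\<close> in a linear hypergraph means having
  vertex-disjoint stars with \<open>d\<^sub>1, \<dots>, d\<^sub>k\<close> edges.

  Upper bound: let \<open>S\<close> be the set of vertices of degree at least a large constant \<open>D\<close>.
  Any vertex of \<open>S\<close> can be the centre of a star avoiding a bounded set of vertices, so
  \<open>s = |S| < k\<close> and the edges avoiding \<open>S\<close> contain no disjoint stars with
  \<open>d\<^sub>s\<^sub>+\<^sub>1, \<dots>, d\<^sub>k\<close> edges. As their degrees are below \<open>D\<close>, a greedy choice of centres
  shows that for some \<open>j > s\<close> only boundedly many vertices have degree \<open>\<ge> d\<^sub>j\<close> among them;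
  so there are at most about \<open>(d\<^sub>j - 1) n / r\<close> such edges. The edges meeting \<open>S\<close> are counted
  through the pairs of vertices they contain, each pair lying in at most one edge.

  Lower bound: for \<open>i \<le> k\<close> take the hypergraph whose edges are blocks of points on lines
  over \<open>\<int>\<^sub>p\<close>, some completed by one of \<open>i - 1\<close> apexes. It is linear because two lines
  meet at most once. Every vertex other than the apexes lies on only \<open>d\<^sub>i - 1\<close> edges
  avoiding the apexes, so each of \<open>i\<close> disjoint stars with at least \<open>d\<^sub>i\<close> edges would need
  its own apex.
\<close>

lemma linear_uniformD:
  assumes "linear_uniform r V H"
  shows "finite V" and "finite H" and "e \<in> H \<Longrightarrow> e \<subseteq> V" and "e \<in> H \<Longrightarrow> card e = r"
    and "e \<in> H \<Longrightarrow> finite e"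
  using assms unfolding linear_uniform_def
  by (auto intro: finite_subset[of H "Pow V"] finite_subset[of e V])

lemma linear_uniform_edges_eqI:
  assumes "linear_uniform r V H" and "e \<in> H" "e' \<in> H"
    and "x \<in> e" "x \<in> e'" "y \<in> e" "y \<in> e'" "x \<noteq> y"
  shows "e = e'"
proof (rule ccontr)
  assume "e \<noteq> e'"
  then have "card (e \<inter> e') \<le> 1"
    using assms(1-3) unfolding linear_uniform_def by blast
  moreover have "{x, y} \<subseteq> e \<inter> e'" using assms(4-7) by blast
  then have "2 \<le> card (e \<inter> e')"
    using assms(8) linear_uniformD(5)[OF assms(1,2)] by (metis card_2_iff card_mono finite_Int)
  ultimately show False by simp
qed

definition degree :: "'a set set \<Rightarrow> 'a \<Rightarrow> nat" where
  "degree H v = card {e \<in> H. v \<in> e}"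

lemma degree_mono: "finite H \<Longrightarrow> G \<subseteq> H \<Longrightarrow> degree G v \<le> degree H v"
  unfolding degree_def by (rule card_mono) auto

lemma sum_degree:
  assumes "linear_uniform r V H"
  shows "(\<Sum>v\<in>V. degree H v) = r * card H"
proof -
  note H = linear_uniformD[OF assms]
  have "(\<Sum>v\<in>V. degree H v) = (\<Sum>v\<in>V. \<Sum>e\<in>H. if v \<in> e then 1 else 0)"
    unfolding degree_def using H(2) by (simp add: sum.If_cases Int_def)
  also have "\<dots> = (\<Sum>e\<in>H. \<Sum>v\<in>V. if v \<in> e then 1 else 0)" by (rule sum.swap)
  also have "\<dots> = (\<Sum>e\<in>H. card e)"
    using H(1,3) by (intro sum.cong) (auto simp: sum.If_cases Int_absorb1)
  also have "\<dots> = r * card H" using H(4) by simp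
  finally show ?thesis .
qed

section \<open>Star packings\<close>

definition star_vertices :: "(nat \<Rightarrow> 'a) \<Rightarrow> (nat \<Rightarrow> 'a set set) \<Rightarrow> nat \<Rightarrow> 'a set" where
  "star_vertices c S i = insert (c i) (\<Union>(S i))"

definition star_packing ::
    "'a set set \<Rightarrow> (nat \<Rightarrow> nat) \<Rightarrow> nat set \<Rightarrow> (nat \<Rightarrow> 'a) \<Rightarrow> (nat \<Rightarrow> 'a set set) \<Rightarrow> bool" where
  "star_packing H d I c S \<longleftrightarrow>
     (\<forall>i\<in>I. S i \<subseteq> H \<and> card (S i) = d i \<and> (\<forall>e\<in>S i. c i \<in> e)) \<and>
     disjoint_family_on (star_vertices c S) I"

lemma star_packingD:
  assumes "star_packing H d I c S" and "i \<in> I"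
  shows "S i \<subseteq> H" and "card (S i) = d i" and "e \<in> S i \<Longrightarrow> c i \<in> e"
  using assms unfolding star_packing_def by auto

lemma star_packing_disjoint:
  assumes "star_packing H d I c S" and "i \<in> I" "j \<in> I" "i \<noteq> j"
  shows "star_vertices c S i \<inter> star_vertices c S j = {}"
  using assms unfolding star_packing_def disjoint_family_on_def by simp

lemma star_packing_empty: "star_packing H d {} c S"
  unfolding star_packing_def disjoint_family_on_def by simp

lemma star_packing_mono: "star_packing G d I c S \<Longrightarrow> G \<subseteq> H \<Longrightarrow> star_packing H d I c S"
  unfolding star_packing_def by blast

lemma star_vertices_fun_upd [simp]:
  "star_vertices (c(i := v)) (S(i := T)) j = (if j = i then insert v (\<Union>T) else star_vertices c S j)"
  unfolding star_vertices_def by simp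

lemma star_packing_insert:
  assumes ps: "star_packing H d I c S" and "i \<notin> I"
    and T: "T \<subseteq> H" "card T = d i" "\<forall>e\<in>T. v \<in> e"
    and disj: "insert v (\<Union>T) \<inter> (\<Union>j\<in>I. star_vertices c S j) = {}"
  shows "star_packing H d (insert i I) (c(i := v)) (S(i := T))"
proof -
  have "disjoint_family_on (star_vertices (c(i := v)) (S(i := T))) (insert i I)"
    unfolding disjoint_family_on_def
  proof (intro ballI impI)
    fix j j' assume "j \<in> insert i I" "j' \<in> insert i I" "j \<noteq> j'"
    then show "star_vertices (c(i := v)) (S(i := T)) j \<inter> star_vertices (c(i := v)) (S(i := T)) j' = {}"
      using star_packing_disjoint[OF ps] disj \<open>i \<notin> I\<close> by (cases "j = i"; cases "j' = i") auto
  qed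
  then show ?thesis
    using ps T \<open>i \<notin> I\<close> unfolding star_packing_def by auto
qed

lemma card_star_vertices_le:
  assumes "linear_uniform r V H" and "star_packing H d I c S" and "i \<in> I"
  shows "card (star_vertices c S i) \<le> 1 + d i * r" and "finite (star_vertices c S i)"
proof -
  have S: "S i \<subseteq> H" "card (S i) = d i" using star_packingD[OF assms(2,3)] by auto
  note H = linear_uniformD[OF assms(1)]
  have "card (\<Union>(S i)) \<le> (\<Sum>e\<in>S i. card e)" by (rule card_Union_le_sum_card)
  also have "\<dots> = d i * r" using S H(4) by (simp add: subset_eq)
  finally have "card (\<Union>(S i)) \<le> d i * r" .
  then show "card (star_vertices c S i) \<le> 1 + d i * r"
    unfolding star_vertices_def by (intro card_insert_le_m1) simp_all
  show "finite (star_vertices c S i)"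
    unfolding star_vertices_def using S H(2,5) finite_subset by blast
qed

lemma card_UN_star_vertices_le:
  assumes "linear_uniform r V H" and "star_packing H d I c S" and "finite I"
    and "\<And>i. i \<in> I \<Longrightarrow> d i \<le> M"
  shows "card (\<Union>i\<in>I. star_vertices c S i) \<le> card I * (1 + M * r)"
    and "finite (\<Union>i\<in>I. star_vertices c S i)"
proof -
  have "card (\<Union>i\<in>I. star_vertices c S i) \<le> (\<Sum>i\<in>I. card (star_vertices c S i))"
    by (rule card_UN_le[OF assms(3)])
  also have "\<dots> \<le> (\<Sum>i\<in>I. 1 + M * r)"
    using card_star_vertices_le(1)[OF assms(1,2)] assms(4)
    by (intro sum_mono) (meson add_le_mono1 le_trans mult_le_mono1 nat_add_left_cancel_le)
  finally show "card (\<Union>i\<in>I. star_vertices c S i) \<le> card I * (1 + M * r)" by simp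
  show "finite (\<Union>i\<in>I. star_vertices c S i)"
    using card_star_vertices_le(2)[OF assms(1,2)] assms(3) by blast
qed

lemma star_edge_eq:
  assumes "r \<ge> 2" "j \<ge> 1"
  shows "star_edge r i j = insert (i, 0, 0) ((\<lambda>t. (i, j, t)) ` {..<r - 1})"
  using assms unfolding star_edge_def by (auto simp: image_iff)

lemma inj_on_UN_disjoint_family:
  assumes "\<And>i. i \<in> I \<Longrightarrow> inj_on f (A i)" and "\<And>i. i \<in> I \<Longrightarrow> f ` A i \<subseteq> B i"
    and "disjoint_family_on B I"
  shows "inj_on f (\<Union>i\<in>I. A i)"
proof (rule inj_onI)
  fix x y assume "x \<in> (\<Union>i\<in>I. A i)" "y \<in> (\<Union>i\<in>I. A i)" "f x = f y"
  then obtain i j where "i \<in> I" "j \<in> I" "x \<in> A i" "y \<in> A j" by blast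
  moreover from this have "i = j"
    using assms(2,3) \<open>f x = f y\<close> unfolding disjoint_family_on_def by blast
  ultimately show "x = y" using assms(1) \<open>f x = f y\<close> by (auto dest: inj_onD)
qed

definition star_piece :: "nat \<Rightarrow> nat \<Rightarrow> nat \<Rightarrow> (nat \<times> nat \<times> nat) set" where
  "star_piece r i j = (if j = 0 then {(i, 0, 0)} else (\<lambda>t. (i, j, t)) ` {..<r - 1})"

lemma Union_star_forest_plus_subset:
  assumes "r \<ge> 2"
  shows "\<Union>(star_forest_plus r k d) \<subseteq> (\<Union>(i, j)\<in>Sigma {1..k} (\<lambda>i. {0..d i}). star_piece r i j)"
proof
  fix y assume "y \<in> \<Union>(star_forest_plus r k d)"
  then obtain i j where ij: "i \<in> {1..k}" "j \<in> {1..d i}" "y \<in> star_edge r i j"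
    unfolding star_forest_plus_def by auto
  moreover have "(i, 0) \<in> Sigma {1..k} (\<lambda>i. {0..d i})" "(i, j) \<in> Sigma {1..k} (\<lambda>i. {0..d i})"
    using ij by auto
  moreover have "y \<in> star_piece r i 0 \<or> y \<in> star_piece r i j"
    using ij assms by (auto simp: star_edge_eq star_piece_def)
  ultimately show "y \<in> (\<Union>(i, j)\<in>Sigma {1..k} (\<lambda>i. {0..d i}). star_piece r i j)"
    by blast
qed

lemma star_packing_leaves_disjoint:
  assumes lu: "linear_uniform r V H" and ps: "star_packing H d I c S"
    and \<sigma>: "\<And>i. i \<in> I \<Longrightarrow> inj_on (\<sigma> i) {1..d i}"
    and \<sigma>S: "\<And>i j. i \<in> I \<Longrightarrow> j \<in> {1..d i} \<Longrightarrow> \<sigma> i j \<in> S i"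
  shows "disjoint_family_on (\<lambda>(i, j). if j = 0 then {c i} else \<sigma> i j - {c i})
           (Sigma I (\<lambda>i. {0..d i}))"
    (is "disjoint_family_on ?leaves _")
  unfolding disjoint_family_on_def
proof (intro ballI impI)
  note S = star_packingD[OF ps]
  fix x y assume x: "x \<in> Sigma I (\<lambda>i. {0..d i})" and y: "y \<in> Sigma I (\<lambda>i. {0..d i})" and "x \<noteq> y"
  obtain i j where i: "x = (i, j)" "i \<in> I" "j \<le> d i" using x by auto
  obtain i' j' where i': "y = (i', j')" "i' \<in> I" "j' \<le> d i'" using y by auto
  have leaves: "?leaves (i, j) \<subseteq> star_vertices c S i" if "i \<in> I" "j \<le> d i" for i j
    using \<sigma>S[OF that(1)] that(2) unfolding star_vertices_def by auto
  show "?leaves x \<inter> ?leaves y = {}"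
  proof (cases "i = i'")
    case False
    then have "star_vertices c S i \<inter> star_vertices c S i' = {}"
      using star_packing_disjoint[OF ps] i i' by simp
    then show ?thesis using leaves[OF i(2,3)] leaves[OF i'(2,3)] unfolding i(1) i'(1) by blast
  next
    case True
    show ?thesis
    proof (rule ccontr)
      assume "?leaves x \<inter> ?leaves y \<noteq> {}"
      then obtain u where u: "u \<in> ?leaves (i, j)" "u \<in> ?leaves (i, j')" using i i' True by auto
      then have "j \<noteq> 0" "j' \<noteq> 0" "j \<noteq> j'"
        using \<open>x \<noteq> y\<close> i i' True by (auto split: if_splits)
      then have jj: "j \<in> {1..d i}" "j' \<in> {1..d i}" using i i' True by auto
      have "\<sigma> i j \<in> S i" "\<sigma> i j' \<in> S i" using \<sigma>S[OF i(2) jj(1)] \<sigma>S[OF i(2) jj(2)] .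
      have "\<sigma> i j = \<sigma> i j'"
      proof (rule linear_uniform_edges_eqI[OF lu])
        show "\<sigma> i j \<in> H" "\<sigma> i j' \<in> H" using \<open>\<sigma> i j \<in> S i\<close> \<open>\<sigma> i j' \<in> S i\<close> S(1)[OF i(2)] by auto
        show "c i \<in> \<sigma> i j" "c i \<in> \<sigma> i j'" using \<open>\<sigma> i j \<in> S i\<close> \<open>\<sigma> i j' \<in> S i\<close> S(3)[OF i(2)] by auto
        show "u \<in> \<sigma> i j" "u \<in> \<sigma> i j'" "c i \<noteq> u" using u \<open>j \<noteq> 0\<close> \<open>j' \<noteq> 0\<close> by auto
      qed
      then show False using \<open>j \<noteq> j'\<close> jj inj_onD[OF \<sigma>[OF i(2)]] by blast
    qed
  qed
qed

lemma star_packing_enumeration: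
  assumes lu: "linear_uniform r V H" and ps: "star_packing H d I c S"
  obtains \<sigma> g where "\<And>i. i \<in> I \<Longrightarrow> bij_betw (\<sigma> i) {1..d i} (S i)"
    and "\<And>i j. i \<in> I \<Longrightarrow> j \<in> {1..d i} \<Longrightarrow> bij_betw (g i j) {..<r - 1} (\<sigma> i j - {c i})"
proof -
  note H = linear_uniformD[OF lu]
  note S = star_packingD[OF ps]
  have "\<exists>\<sigma>. bij_betw \<sigma> {1..d i} (S i)" if "i \<in> I" for i
    using ex_bij_betw_nat_finite_1[of "S i"] S[OF that] H(2) by (metis finite_subset)
  then obtain \<sigma> where \<sigma>: "\<And>i. i \<in> I \<Longrightarrow> bij_betw (\<sigma> i) {1..d i} (S i)" by metis
  have "\<exists>g. bij_betw g {..<r - 1} (\<sigma> i j - {c i})" if "i \<in> I" "j \<in> {1..d i}" for i j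
  proof -
    have "\<sigma> i j \<in> S i" using bij_betwE[OF \<sigma>[OF that(1)]] that(2) by blast
    then have "\<sigma> i j \<in> H" "c i \<in> \<sigma> i j" using S[OF that(1)] by auto
    then have "finite (\<sigma> i j - {c i})" "card (\<sigma> i j - {c i}) = r - 1" using H(4,5) by auto
    then show ?thesis using ex_bij_betw_nat_finite[of "\<sigma> i j - {c i}"] by (metis lessThan_atLeast0)
  qed
  then obtain g where "\<And>i j. i \<in> I \<Longrightarrow> j \<in> {1..d i} \<Longrightarrow> bij_betw (g i j) {..<r - 1} (\<sigma> i j - {c i})"
    by metis
  with \<sigma> show thesis by (rule that)
qed

lemma star_packing_imp_contains_copy:
  assumes lu: "linear_uniform r V H" and r: "r \<ge> 2" and ps: "star_packing H d {1..k} c S"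
  shows "contains_copy H (star_forest_plus r k d)"
proof -
  note S = star_packingD[OF ps]
  obtain \<sigma> g where \<sigma>: "\<And>i. i \<in> {1..k} \<Longrightarrow> bij_betw (\<sigma> i) {1..d i} (S i)"
    and g: "\<And>i j. i \<in> {1..k} \<Longrightarrow> j \<in> {1..d i} \<Longrightarrow> bij_betw (g i j) {..<r - 1} (\<sigma> i j - {c i})"
    using star_packing_enumeration[OF lu ps] by blast
  have \<sigma>S: "\<sigma> i j \<in> S i" if "i \<in> {1..k}" "j \<in> {1..d i}" for i j
    using bij_betwE[OF \<sigma>[OF that(1)]] that(2) by blast
  define f :: "nat \<times> nat \<times> nat \<Rightarrow> 'a" where "f = (\<lambda>(i, j, t). if j = 0 then c i else g i j t)"
  have image_edge: "f ` star_edge r i j = \<sigma> i j" if "i \<in> {1..k}" "j \<in> {1..d i}" for i j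
  proof -
    have "f ` star_edge r i j = insert (c i) (g i j ` {..<r - 1})"
      using that r by (auto simp: star_edge_eq f_def image_image)
    also have "g i j ` {..<r - 1} = \<sigma> i j - {c i}"
      using g[OF that] by (simp add: bij_betw_def)
    finally show ?thesis using \<sigma>S[OF that] S(3)[OF that(1)] by auto
  qed
  have piece: "inj_on f ((\<lambda>(i, j). star_piece r i j) x) \<and>
      f ` (\<lambda>(i, j). star_piece r i j) x \<subseteq> (\<lambda>(i, j). if j = 0 then {c i} else \<sigma> i j - {c i}) x"
    if x_mem: "x \<in> Sigma {1..k} (\<lambda>i. {0..d i})" for x
  proof -
    obtain i j where x: "x = (i, j)" and i: "i \<in> {1..k}" and "j \<le> d i" using x_mem by auto
    show ?thesis
    proof (cases "j = 0")
      case False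
      then have j: "j \<in> {1..d i}" using \<open>j \<le> d i\<close> by auto
      show ?thesis
        using False bij_betw_imp_inj_on[OF g[OF i j]] bij_betwE[OF g[OF i j]]
        unfolding x star_piece_def f_def inj_on_def by auto
    qed (simp add: x star_piece_def f_def)
  qed
  have "inj_on f (\<Union>(i, j)\<in>Sigma {1..k} (\<lambda>i. {0..d i}). star_piece r i j)"
  proof (rule inj_on_UN_disjoint_family)
    show "disjoint_family_on (\<lambda>(i, j). if j = 0 then {c i} else \<sigma> i j - {c i})
        (Sigma {1..k} (\<lambda>i. {0..d i}))"
      using star_packing_leaves_disjoint[OF lu ps] \<sigma> \<sigma>S bij_betw_imp_inj_on by blast
  qed (use piece in blast)+
  then have "inj_on f (\<Union>(star_forest_plus r k d))"
    by (rule inj_on_subset[OF _ Union_star_forest_plus_subset[OF r]])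
  moreover have "f ` e \<in> H" if e: "e \<in> star_forest_plus r k d" for e
  proof -
    obtain i j where ij: "i \<in> {1..k}" "j \<in> {1..d i}" and "e = star_edge r i j"
      using e unfolding star_forest_plus_def by auto
    then show ?thesis using image_edge[OF ij] \<sigma>S[OF ij] S(1)[OF ij(1)] by auto
  qed
  ultimately show ?thesis unfolding contains_copy_def by blast
qed

lemma contains_copy_imp_star_packing:
  assumes r: "r \<ge> 2" and "contains_copy H (star_forest_plus r k d)"
    and dpos: "\<And>i. 1 \<le> i \<Longrightarrow> i \<le> k \<Longrightarrow> d i \<ge> 1"
  shows "\<exists>c S. star_packing H d {1..k} c S"
proof -
  define U where "U = \<Union>(star_forest_plus r k d)"
  obtain f where inj: "inj_on f U" and edges: "\<And>e. e \<in> star_forest_plus r k d \<Longrightarrow> f ` e \<in> H"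
    using assms(2) unfolding contains_copy_def U_def by blast
  define c where "c = (\<lambda>i. f (i, 0, 0))"
  define S where "S = (\<lambda>i. (\<lambda>j. f ` star_edge r i j) ` {1..d i})"
  define A where "A = (\<lambda>i. {x \<in> U. fst x = i})"
  have edge: "star_edge r i j \<in> star_forest_plus r k d" "star_edge r i j \<subseteq> U"
    if "i \<in> {1..k}" "j \<in> {1..d i}" for i j
    using that unfolding U_def star_forest_plus_def by auto
  have centre: "(i, 0, 0) \<in> U" if "i \<in> {1..k}" for i
    using edge(2)[of i 1] that dpos[of i] unfolding star_edge_def by auto
  have "inj_on (\<lambda>j. f ` star_edge r i j) {1..d i}" if i: "i \<in> {1..k}" for i
  proof (rule inj_onI)
    fix j j' assume j: "j \<in> {1..d i}" "j' \<in> {1..d i}" and "f ` star_edge r i j = f ` star_edge r i j'"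
    then have "star_edge r i j = star_edge r i j'"
      using inj_on_image_eq_iff[OF inj edge(2)[OF i j(1)] edge(2)[OF i j(2)]] by blast
    moreover have "(i, j, 0) \<in> star_edge r i j" unfolding star_edge_def by simp
    ultimately show "j = j'"
      using j unfolding star_edge_def by auto
  qed
  then have card: "card (S i) = d i" if "i \<in> {1..k}" for i
    using that unfolding S_def by (simp add: card_image)
  have edge_A: "f ` star_edge r i j \<subseteq> f ` A i" if "i \<in> {1..k}" "j \<in> {1..d i}" for i j
    using edge(2)[OF that] unfolding A_def star_edge_def by (intro image_mono) auto
  have centre_A: "c i \<in> f ` A i" if "i \<in> {1..k}" for i
    using centre[OF that] unfolding c_def A_def by force
  have vertices: "star_vertices c S i \<subseteq> f ` A i" if i: "i \<in> {1..k}" for i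
    using edge_A[OF i] centre_A[OF i] unfolding star_vertices_def S_def by blast
  have "disjoint_family_on (star_vertices c S) {1..k}"
    unfolding disjoint_family_on_def
  proof (intro ballI impI)
    fix i i' assume i: "i \<in> {1..k}" "i' \<in> {1..k}" "i \<noteq> i'"
    then have "f ` A i \<inter> f ` A i' = {}"
      using inj_on_image_Int[OF inj, of "A i" "A i'"] unfolding A_def by auto
    then show "star_vertices c S i \<inter> star_vertices c S i' = {}"
      using vertices[OF i(1)] vertices[OF i(2)] by blast
  qed
  moreover have "S i \<subseteq> H" if "i \<in> {1..k}" for i
    using edges edge(1)[OF that] unfolding S_def by blast
  moreover have "c i \<in> e" if "i \<in> {1..k}" "e \<in> S i" for i e
    using that unfolding S_def c_def star_edge_def by auto
  ultimately show ?thesis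
    using card unfolding star_packing_def by blast
qed

lemma no_star_packing_small_cover:
  assumes "finite H" and T: "finite T" "card T < i0" and "i0 \<le> k"
    and dmono: "\<And>i j. 1 \<le> i \<Longrightarrow> i \<le> j \<Longrightarrow> j \<le> k \<Longrightarrow> d j \<le> d i"
    and low: "\<And>u. u \<notin> T \<Longrightarrow> card {e \<in> H. u \<in> e \<and> e \<inter> T = {}} < d i0"
  shows "\<not> star_packing H d {1..k} c S"
proof
  assume ps: "star_packing H d {1..k} c S"
  \<comment> \<open>each of the first \<open>i0\<close> stars meets \<open>T\<close>, and they are disjoint\<close>
  have "\<exists>t. t \<in> T \<and> t \<in> star_vertices c S i" if i: "i \<in> {1..i0}" for i
  proof (rule ccontr)
    assume "\<not> ?thesis"
    have ik: "i \<in> {1..k}" using i \<open>i0 \<le> k\<close> by auto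
    from \<open>\<not> ?thesis\<close> have "c i \<notin> T" and "S i \<subseteq> {e \<in> H. c i \<in> e \<and> e \<inter> T = {}}"
      using star_packingD[OF ps ik] unfolding star_vertices_def by auto
    then have "card (S i) \<le> card {e \<in> H. c i \<in> e \<and> e \<inter> T = {}}"
      by (intro card_mono) (use \<open>finite H\<close> in simp_all)
    then have "card (S i) < d i0" using low[OF \<open>c i \<notin> T\<close>] by linarith
    moreover have "d i0 \<le> card (S i)"
      using star_packingD(2)[OF ps] dmono[of i i0] i \<open>i0 \<le> k\<close> by auto
    ultimately show False by simp
  qed
  then obtain \<phi> where \<phi>: "\<And>i. i \<in> {1..i0} \<Longrightarrow> \<phi> i \<in> T \<and> \<phi> i \<in> star_vertices c S i" by metis
  have "inj_on \<phi> {1..i0}"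
  proof (rule inj_onI)
    fix i i' assume "i \<in> {1..i0}" "i' \<in> {1..i0}" "\<phi> i = \<phi> i'"
    then show "i = i'"
      using star_packing_disjoint[OF ps, of i i'] \<phi> \<open>i0 \<le> k\<close> by fastforce
  qed
  then have "card {1..i0} \<le> card T" using \<phi> T(1) by (intro card_inj_on_le) auto
  then show False using T(2) by simp
qed

section \<open>The upper bound\<close>

lemma card_edges_through_meeting_le:
  assumes "linear_uniform r V H" and "finite W" and "v \<notin> W"
  shows "card {e \<in> H. v \<in> e \<and> e \<inter> W \<noteq> {}} \<le> card W"
proof -
  note H = linear_uniformD[OF assms(1)]
  have one: "card {e \<in> H. v \<in> e \<and> w \<in> e} \<le> 1" if "w \<in> W" for w
  proof -
    have "e = e'" if "e \<in> {e \<in> H. v \<in> e \<and> w \<in> e}" "e' \<in> {e \<in> H. v \<in> e \<and> w \<in> e}" for e e'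
      using that linear_uniform_edges_eqI[OF assms(1), of e e' v w] \<open>w \<in> W\<close> assms(3) by auto
    then show ?thesis using H(2) by (simp add: card_le_Suc0_iff_eq)
  qed
  have "{e \<in> H. v \<in> e \<and> e \<inter> W \<noteq> {}} = (\<Union>w\<in>W. {e \<in> H. v \<in> e \<and> w \<in> e})" by blast
  also have "card \<dots> \<le> (\<Sum>w\<in>W. card {e \<in> H. v \<in> e \<and> w \<in> e})" by (rule card_UN_le[OF assms(2)])
  also have "\<dots> \<le> (\<Sum>w\<in>W. 1)" using one by (rule sum_mono)
  finally show ?thesis by simp
qed

lemma star_packing_insert_avoiding:
  assumes lu: "linear_uniform r V H" and ps: "star_packing H d I c S" and "i \<notin> I"
    and W: "finite W" "(\<Union>j\<in>I. star_vertices c S j) \<subseteq> W" "v \<notin> W"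
    and deg: "card W + d i \<le> degree H v"
  obtains T where "star_packing H d (insert i I) (c(i := v)) (S(i := T))" and "insert v (\<Union>T) \<inter> W = {}"
proof -
  have "{e \<in> H. v \<in> e} - {e \<in> H. v \<in> e \<and> e \<inter> W \<noteq> {}} = {e \<in> H. v \<in> e \<and> e \<inter> W = {}}" by blast
  moreover have "card W + d i \<le> card {e \<in> H. v \<in> e}" using deg unfolding degree_def .
  then have "d i \<le> card ({e \<in> H. v \<in> e} - {e \<in> H. v \<in> e \<and> e \<inter> W \<noteq> {}})"
    using card_edges_through_meeting_le[OF lu W(1,3)] linear_uniformD(2)[OF lu]
    by (subst card_Diff_subset) auto
  ultimately have "d i \<le> card {e \<in> H. v \<in> e \<and> e \<inter> W = {}}" by simp
  then obtain T where T: "T \<subseteq> {e \<in> H. v \<in> e \<and> e \<inter> W = {}}" "card T = d i"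
    by (rule obtain_subset_with_card_n)
  then have "star_packing H d (insert i I) (c(i := v)) (S(i := T))"
    using W by (intro star_packing_insert[OF ps \<open>i \<notin> I\<close>]) auto
  moreover have "insert v (\<Union>T) \<inter> W = {}" using T W(3) by blast
  ultimately show thesis by (rule that)
qed

lemma star_packing_insert_high_degree:
  assumes lu: "linear_uniform r V H" and ps: "star_packing H d K c S" and "finite K" "i \<notin> K"
    and dM: "\<And>j. j \<in> insert i K \<Longrightarrow> d j \<le> M"
    and F: "finite F" "v \<notin> (\<Union>j\<in>K. star_vertices c S j) \<union> F"
    and deg: "card F + card K * (1 + M * r) + M \<le> degree H v"
  obtains T where "star_packing H d (insert i K) (c(i := v)) (S(i := T))" and "insert v (\<Union>T) \<inter> F = {}"
proof -
  define W where "W = (\<Union>j\<in>K. star_vertices c S j) \<union> F"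
  have used: "card (\<Union>j\<in>K. star_vertices c S j) \<le> card K * (1 + M * r)"
    "finite (\<Union>j\<in>K. star_vertices c S j)"
    using card_UN_star_vertices_le[OF lu ps \<open>finite K\<close>] dM by auto
  then have "card W + d i \<le> degree H v"
    using card_Un_le[of "\<Union>j\<in>K. star_vertices c S j" F] dM[of i] deg unfolding W_def by simp
  moreover have "finite W" "(\<Union>j\<in>K. star_vertices c S j) \<subseteq> W" "v \<notin> W"
    using used(2) F unfolding W_def by auto
  ultimately obtain T where "star_packing H d (insert i K) (c(i := v)) (S(i := T))"
    and "insert v (\<Union>T) \<inter> W = {}"
    using star_packing_insert_avoiding[OF lu ps \<open>i \<notin> K\<close>] by blast
  then show thesis using that unfolding W_def by blast
qed

lemma star_packing_extend_centres:
  assumes lu: "linear_uniform r V H"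
    and J: "finite J" "star_packing H d J c S"
    and I: "finite I" "I \<inter> J = {}" "inj_on b I"
    and avoid: "(\<Union>j\<in>J. star_vertices c S j) \<inter> b ` I = {}"
    and dM: "\<And>i. i \<in> I \<union> J \<Longrightarrow> d i \<le> M"
    and deg: "\<And>i. i \<in> I \<Longrightarrow> card I + card (I \<union> J) * (1 + M * r) + M \<le> degree H (b i)"
  shows "\<exists>c' S'. star_packing H d (I \<union> J) c' S'"
proof -
  \<comment> \<open>the stars built so far avoid the centres still to be used\<close>
  have "\<exists>c' S'. star_packing H d (I' \<union> J) c' S' \<and>
      (\<Union>j\<in>I' \<union> J. star_vertices c' S' j) \<inter> b ` (I - I') = {}" if "I' \<subseteq> I" for I'
    using finite_subset[OF that I(1)] that
  proof (induction I' rule: finite_induct)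
    case empty
    then show ?case using J(2) avoid by auto
  next
    case (insert i I')
    then obtain c' S' where ps: "star_packing H d (I' \<union> J) c' S'"
      and avoid': "(\<Union>j\<in>I' \<union> J. star_vertices c' S' j) \<inter> b ` (I - I') = {}" by auto
    have "i \<in> I" "i \<notin> I' \<union> J" using insert I(2) by auto
    have "card (b ` (I - insert i I')) \<le> card I"
      using card_image_le[of "I - insert i I'" b] card_mono[OF I(1), of "I - insert i I'"] I(1) by auto
    moreover have "card (I' \<union> J) \<le> card (I \<union> J)" using insert I(1) J(1) by (intro card_mono) auto
    ultimately have "card (b ` (I - insert i I')) + card (I' \<union> J) * (1 + M * r) + M
        \<le> card I + card (I \<union> J) * (1 + M * r) + M"
      by (intro add_mono mult_le_mono1) auto
    then have deg': "card (b ` (I - insert i I')) + card (I' \<union> J) * (1 + M * r) + M \<le> degree H (b i)"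
      using deg[OF \<open>i \<in> I\<close>] by linarith
    have notin: "b i \<notin> (\<Union>j\<in>I' \<union> J. star_vertices c' S' j) \<union> b ` (I - insert i I')"
      using avoid' inj_onD[OF I(3)] \<open>i \<in> I\<close> insert.hyps(2) by blast
    have K: "finite (I' \<union> J)" "\<And>j. j \<in> insert i (I' \<union> J) \<Longrightarrow> d j \<le> M"
      using insert J(1) dM by auto
    obtain T where ps': "star_packing H d (insert i (I' \<union> J)) (c'(i := b i)) (S'(i := T))"
      and new: "insert (b i) (\<Union>T) \<inter> b ` (I - insert i I') = {}"
      by (rule star_packing_insert_high_degree[OF lu ps K(1) \<open>i \<notin> I' \<union> J\<close> K(2) _ notin deg'])
        (use I(1) in auto)
    have "(\<Union>j\<in>insert i I' \<union> J. star_vertices (c'(i := b i)) (S'(i := T)) j) \<inter> b ` (I - insert i I') = {}"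
      using avoid' new \<open>i \<notin> I' \<union> J\<close> by auto
    with ps' show ?case by (metis Un_insert_left)
  qed
  then show ?thesis by blast
qed

lemma star_packing_from_high_degree:
  assumes lu: "linear_uniform r V H" and "t \<le> k" and b: "inj_on b {1..t}"
    and high: "\<And>i. i \<in> {1..t} \<Longrightarrow> k + k * (1 + M * r) + M \<le> degree H (b i)"
    and dM: "\<And>i. i \<in> {1..k} \<Longrightarrow> d i \<le> M"
    and dpos: "\<And>i. 1 \<le> i \<Longrightarrow> i \<le> k \<Longrightarrow> d i \<ge> 1"
    and ps: "star_packing {e \<in> H. e \<inter> b ` {1..t} = {}} d {t+1..k} c S"
  shows "\<exists>c S. star_packing H d {1..k} c S"
proof -
  have IJ: "{1..t} \<union> {t+1..k} = {1..k}" "card {1..t} \<le> k" using \<open>t \<le> k\<close> by auto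
  have "star_vertices c S i \<subseteq> \<Union>{e \<in> H. e \<inter> b ` {1..t} = {}}" if i: "i \<in> {t+1..k}" for i
  proof -
    have "card (S i) \<ge> 1" using star_packingD(2)[OF ps i] dpos[of i] i by auto
    then obtain e where "e \<in> S i" by fastforce
    then show ?thesis
      using star_packingD(1,3)[OF ps i] unfolding star_vertices_def by blast
  qed
  then have "(\<Union>i\<in>{t+1..k}. star_vertices c S i) \<inter> b ` {1..t} = {}" by blast
  moreover have "card {1..t} + card ({1..t} \<union> {t+1..k}) * (1 + M * r) + M \<le> degree H (b i)"
    if "i \<in> {1..t}" for i
    using high[OF that] IJ by simp
  ultimately have "\<exists>c S. star_packing H d ({1..t} \<union> {t+1..k}) c S"
    using star_packing_mono[OF ps] dM IJ(1)
    by (intro star_packing_extend_centres[OF lu _ _ _ _ b]) auto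
  then show ?thesis unfolding IJ(1) .
qed

lemma card_high_degree_less:
  assumes lu: "linear_uniform r V H" and "finite S"
    and high: "\<And>v. v \<in> S \<Longrightarrow> k + k * (1 + M * r) + M \<le> degree H v"
    and dpos: "\<And>i. 1 \<le> i \<Longrightarrow> i \<le> k \<Longrightarrow> d i \<ge> 1" and dM: "\<And>i. i \<in> {1..k} \<Longrightarrow> d i \<le> M"
    and no_packing: "\<not> (\<exists>c S. star_packing H d {1..k} c S)"
  shows "card S < k"
proof (rule ccontr)
  assume "\<not> card S < k"
  then obtain b where b: "inj_on b {1..k}" "b ` {1..k} \<subseteq> S"
    using card_le_inj[of "{1..k}" S] \<open>finite S\<close> by auto
  have "star_packing {e \<in> H. e \<inter> b ` {1..k} = {}} d {k+1..k} c c'" for c c'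
    using star_packing_empty by simp
  moreover have "k + k * (1 + M * r) + M \<le> degree H (b i)" if "i \<in> {1..k}" for i
    using high b(2) that by blast
  ultimately have "\<exists>c S. star_packing H d {1..k} c S"
    using star_packing_from_high_degree[where d = d and M = M, OF lu order_refl b(1) _ dM dpos]
    by blast
  with no_packing show False by blast
qed

lemma no_star_packing_avoiding_high_degree:
  assumes lu: "linear_uniform r V H" and "finite S" and "card S < k"
    and high: "\<And>v. v \<in> S \<Longrightarrow> k + k * (1 + M * r) + M \<le> degree H v"
    and dpos: "\<And>i. 1 \<le> i \<Longrightarrow> i \<le> k \<Longrightarrow> d i \<ge> 1" and dM: "\<And>i. i \<in> {1..k} \<Longrightarrow> d i \<le> M"
    and no_packing: "\<not> (\<exists>c S. star_packing H d {1..k} c S)"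
  shows "\<not> (\<exists>c S'. star_packing {e \<in> H. e \<inter> S = {}} d {card S + 1..k} c S')"
proof
  obtain b where b: "bij_betw b {1..card S} S"
    using ex_bij_betw_nat_finite_1[OF \<open>finite S\<close>] by blast
  assume "\<exists>c S'. star_packing {e \<in> H. e \<inter> S = {}} d {card S + 1..k} c S'"
  moreover have "S = b ` {1..card S}" using bij_betw_imp_surj_on[OF b] by simp
  ultimately obtain c S' where "star_packing {e \<in> H. e \<inter> b ` {1..card S} = {}} d {card S + 1..k} c S'"
    by auto
  moreover have "k + k * (1 + M * r) + M \<le> degree H (b i)" if "i \<in> {1..card S}" for i
    using high bij_betwE[OF b] that by blast
  ultimately have "\<exists>c S. star_packing H d {1..k} c S"
    using less_imp_le[OF \<open>card S < k\<close>]
    using star_packing_from_high_degree[where d = d and M = M and k = k,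
        OF lu _ bij_betw_imp_inj_on[OF b] _ dM dpos]
    by blast
  with no_packing show False by blast
qed

lemma card_closed_neighbourhood_le:
  assumes lu: "linear_uniform r V H" and "finite W" and maxdeg: "\<And>v. v \<in> V \<Longrightarrow> degree H v \<le> D"
  shows "card (W \<union> \<Union>{e \<in> H. e \<inter> W \<noteq> {}}) \<le> card W * (1 + D * r)"
proof -
  note H = linear_uniformD[OF lu]
  have "card (\<Union>{e \<in> H. w \<in> e}) \<le> D * r" for w
  proof (cases "w \<in> V")
    case True
    have "card (\<Union>{e \<in> H. w \<in> e}) \<le> (\<Sum>e\<in>{e \<in> H. w \<in> e}. card e)"
      by (rule card_Union_le_sum_card)
    also have "\<dots> = degree H w * r" using H(4) unfolding degree_def by simp
    also have "\<dots> \<le> D * r" using maxdeg[OF True] by simp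
    finally show ?thesis .
  next
    case False
    then have "{e \<in> H. w \<in> e} = {}" using H(3) by blast
    then show ?thesis by (simp only: Union_empty card.empty le0)
  qed
  then have "(\<Sum>w\<in>W. card (\<Union>{e \<in> H. w \<in> e})) \<le> card W * (D * r)"
    using sum_mono[of W _ "\<lambda>_. D * r"] by simp
  moreover have "\<Union>{e \<in> H. e \<inter> W \<noteq> {}} = (\<Union>w\<in>W. \<Union>{e \<in> H. w \<in> e})" by blast
  ultimately have "card (\<Union>{e \<in> H. e \<inter> W \<noteq> {}}) \<le> card W * (D * r)"
    using card_UN_le[OF assms(2), of "\<lambda>w. \<Union>{e \<in> H. w \<in> e}"] by simp
  then show ?thesis
    using card_Un_le[of W "\<Union>{e \<in> H. e \<inter> W \<noteq> {}}"] by (simp add: algebra_simps)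
qed

lemma star_packing_insert_far:
  assumes ps: "star_packing H d I c S" and "i \<notin> I"
    and far: "v \<notin> (\<Union>j\<in>I. star_vertices c S j) \<union> \<Union>{e \<in> H. e \<inter> (\<Union>j\<in>I. star_vertices c S j) \<noteq> {}}"
    and deg: "d i \<le> degree H v"
  obtains T where "star_packing H d (insert i I) (c(i := v)) (S(i := T))"
proof -
  obtain T where T: "T \<subseteq> {e \<in> H. v \<in> e}" "card T = d i"
    using deg unfolding degree_def by (rule obtain_subset_with_card_n)
  moreover have "insert v (\<Union>T) \<inter> (\<Union>j\<in>I. star_vertices c S j) = {}" using T(1) far by blast
  ultimately show thesis by (intro that star_packing_insert[OF ps \<open>i \<notin> I\<close>]) auto
qed

lemma star_packing_greedy:
  assumes lu: "linear_uniform r U G"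
    and maxdeg: "\<And>u. u \<in> U \<Longrightarrow> degree G u \<le> D"
    and dM: "\<And>i. i \<in> {s+1..k} \<Longrightarrow> d i \<le> M"
    and many: "\<And>j. j \<in> {s+1..k} \<Longrightarrow>
      (j - s - 1) * ((1 + M * r) * (1 + D * r)) < card {u \<in> U. d j \<le> degree G u}"
  shows "\<exists>c S. star_packing G d {s+1..k} c S"
proof -
  note G = linear_uniformD[OF lu]
  have "\<exists>c S. star_packing G d {s+1..m} c S" if "m \<le> k" for m
    using that
  proof (induction m)
    case 0
    then show ?case using star_packing_empty by fastforce
  next
    case (Suc m)
    show ?case
    proof (cases "Suc m \<le> s")
      case True
      then show ?thesis using star_packing_empty by fastforce
    next
      case False
      obtain c S where ps: "star_packing G d {s+1..m} c S" using Suc by auto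
      define W where "W = (\<Union>i\<in>{s+1..m}. star_vertices c S i)"
      define N where "N = W \<union> \<Union>{e \<in> G. e \<inter> W \<noteq> {}}"
      have W: "card W \<le> (m - s) * (1 + M * r)" "finite W"
        using card_UN_star_vertices_le[OF lu ps, of M] dM Suc.prems unfolding W_def by auto
      have "finite N" unfolding N_def using W(2) G(2,5) by auto
      have "card N \<le> card W * (1 + D * r)"
        unfolding N_def by (rule card_closed_neighbourhood_le[OF lu W(2) maxdeg])
      also have "\<dots> \<le> (Suc m - s - 1) * ((1 + M * r) * (1 + D * r))"
        using mult_le_mono1[OF W(1), of "1 + D * r"] by (simp only: mult.assoc diff_Suc_1 Suc_diff_le) simp
      also have "\<dots> < card {u \<in> U. d (Suc m) \<le> degree G u}"
        using False Suc.prems by (intro many) auto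
      finally have "\<not> {u \<in> U. d (Suc m) \<le> degree G u} \<subseteq> N"
        using card_mono[OF \<open>finite N\<close>] by (meson leD)
      then obtain v where v: "v \<notin> N" "d (Suc m) \<le> degree G v" by blast
      from v(1) have far: "v \<notin> (\<Union>j\<in>{s+1..m}. star_vertices c S j)
          \<union> \<Union>{e \<in> G. e \<inter> (\<Union>j\<in>{s+1..m}. star_vertices c S j) \<noteq> {}}"
        unfolding N_def W_def .
      obtain T where "star_packing G d (insert (Suc m) {s+1..m}) (c(Suc m := v)) (S(Suc m := T))"
        by (rule star_packing_insert_far[OF ps _ far v(2)]) auto
      moreover have "insert (Suc m) {s+1..m} = {s+1..Suc m}" using False by auto
      ultimately show ?thesis by auto
    qed
  qed
  then show ?thesis by blast
qed

lemma sum_card_disjoint_family_le: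
  assumes "finite A" and "finite X" and "\<And>a. a \<in> A \<Longrightarrow> P a \<subseteq> X" and "disjoint_family_on P A"
  shows "(\<Sum>a\<in>A. card (P a)) \<le> card X"
proof -
  have "(\<Sum>a\<in>A. card (P a)) = card (\<Union>a\<in>A. P a)"
    using assms by (intro card_UN_disjoint'[symmetric]) (auto intro: finite_subset)
  also have "\<dots> \<le> card X" using assms by (intro card_mono) auto
  finally show ?thesis .
qed

lemma sum_card_cross_pairs_le:
  assumes lu: "linear_uniform r V H" and "S \<subseteq> V"
  shows "(\<Sum>e\<in>H. card (e \<inter> S) * card (e - S)) \<le> card S * (card V - card S)"
proof -
  note H = linear_uniformD[OF lu]
  have "(\<Sum>e\<in>H. card (e \<inter> S) * card (e - S)) = (\<Sum>e\<in>H. card ((e \<inter> S) \<times> (e - S)))"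
    by (simp add: card_cartesian_product)
  also have "\<dots> \<le> card (S \<times> (V - S))"
  proof (rule sum_card_disjoint_family_le)
    show "finite (S \<times> (V - S))" using H(1) assms(2) finite_subset by blast
    show "(e \<inter> S) \<times> (e - S) \<subseteq> S \<times> (V - S)" if "e \<in> H" for e using H(3)[OF that] by blast
    show "disjoint_family_on (\<lambda>e. (e \<inter> S) \<times> (e - S)) H"
      unfolding disjoint_family_on_def
    proof (intro ballI impI)
      fix e e' assume "e \<in> H" "e' \<in> H" "e \<noteq> e'"
      then show "(e \<inter> S) \<times> (e - S) \<inter> (e' \<inter> S) \<times> (e' - S) = {}"
        using linear_uniform_edges_eqI[OF lu \<open>e \<in> H\<close> \<open>e' \<in> H\<close>] by fastforce
    qed
  qed (use H(2) in simp)
  also have "\<dots> = card S * (card V - card S)"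
    using H(1) assms(2) by (simp add: card_cartesian_product card_Diff_subset finite_subset)
  finally show ?thesis .
qed

lemma sum_card_inner_pairs_le:
  assumes lu: "linear_uniform r V H" and "S \<subseteq> V"
  shows "(\<Sum>e\<in>H. card (e \<inter> S) choose 2) \<le> card S choose 2"
proof -
  note H = linear_uniformD[OF lu]
  have "(\<Sum>e\<in>H. card (e \<inter> S) choose 2) = (\<Sum>e\<in>H. card {B. B \<subseteq> e \<inter> S \<and> card B = 2})"
    using H(5) n_subsets[of "_ \<inter> S" 2] by (intro sum.cong) simp_all
  also have "\<dots> \<le> card {B. B \<subseteq> S \<and> card B = 2}"
  proof (rule sum_card_disjoint_family_le)
    have "finite S" using H(1) assms(2) finite_subset by blast
    then show "finite {B. B \<subseteq> S \<and> card B = 2}" by simp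
    show "disjoint_family_on (\<lambda>e. {B. B \<subseteq> e \<inter> S \<and> card B = 2}) H"
      unfolding disjoint_family_on_def
    proof (intro ballI impI)
      fix e e' assume "e \<in> H" "e' \<in> H" "e \<noteq> e'"
      then show "{B. B \<subseteq> e \<inter> S \<and> card B = 2} \<inter> {B. B \<subseteq> e' \<inter> S \<and> card B = 2} = {}"
        using linear_uniform_edges_eqI[OF lu \<open>e \<in> H\<close> \<open>e' \<in> H\<close>] by (fastforce simp: card_2_iff)
    qed
  qed (use H(2) in auto)
  also have "\<dots> = card S choose 2"
    using H(1) assms(2) by (simp add: n_subsets finite_subset)
  finally show ?thesis .
qed

lemma of_nat_choose_two: "real (n choose 2) = real n * (real n - 1) / 2"
proof (induction n)
  case (Suc n)
  have "Suc n choose 2 = n + (n choose 2)" by (simp add: numeral_2_eq_2)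
  then show ?case using Suc by (simp add: field_simps)
qed simp

lemma edge_weight_ge_one:
  fixes x R :: real
  assumes "1 \<le> x" "x \<le> R" "2 \<le> R"
  shows "1 \<le> x * (R - x) / (R - 1) + x * (x - 1) / (R * (R - 1))"
proof -
  have "0 \<le> (R - 1) * (x - 1) * (R - x)" using assms by simp
  then have "R * (R - 1) \<le> R * x * (R - x) + x * (x - 1)" by (simp add: algebra_simps)
  moreover have "x * (R - x) / (R - 1) = R * x * (R - x) / (R * (R - 1))"
    using assms by simp
  then have "x * (R - x) / (R - 1) + x * (x - 1) / (R * (R - 1))
      = (R * x * (R - x) + x * (x - 1)) / (R * (R - 1))"
    by (simp add: add_divide_distrib)
  ultimately show ?thesis using assms by (simp add: le_divide_eq)
qed

lemma card_edges_meeting_le: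
  assumes lu: "linear_uniform r V H" and r: "r \<ge> 2" and S: "S \<subseteq> V"
  shows "real (card {e \<in> H. e \<inter> S \<noteq> {}}) \<le>
    real (card S) * real (card V - card S) / (real r - 1) + real (card S choose 2) / real (r choose 2)"
proof -
  note H = linear_uniformD[OF lu]
  define w where "w e = real (card (e \<inter> S) * card (e - S)) / (real r - 1)
      + real (card (e \<inter> S) choose 2) / real (r choose 2)" for e
  have pos: "real r - 1 > 0" "real (r choose 2) > 0" using r by (auto simp: of_nat_choose_two)
  have w_ge: "1 \<le> w e" if e: "e \<in> H" "e \<inter> S \<noteq> {}" for e
  proof -
    have "finite e" "card e = r" using H(4,5) e(1) by auto
    then have a: "1 \<le> card (e \<inter> S)" "card (e \<inter> S) \<le> r"
      using e(2) card_mono[of e "e \<inter> S"] by (auto simp: Suc_le_eq card_gt_0_iff)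
    have "card (e - S) = r - card (e \<inter> S)"
      using card_Diff_subset_Int[of e S] \<open>finite e\<close> \<open>card e = r\<close> by (simp add: Diff_Int2)
    then show ?thesis
      using edge_weight_ge_one[of "real (card (e \<inter> S))" "real r"] a r
      unfolding w_def by (simp add: of_nat_choose_two of_nat_diff)
  qed
  have "real (card {e \<in> H. e \<inter> S \<noteq> {}}) \<le> (\<Sum>e\<in>{e \<in> H. e \<inter> S \<noteq> {}}. w e)"
    using sum_mono[of "{e \<in> H. e \<inter> S \<noteq> {}}" "\<lambda>_. 1" w] w_ge by simp
  also have "\<dots> \<le> (\<Sum>e\<in>H. w e)"
    using H(2) pos by (intro sum_mono2) (auto simp: w_def)
  also have "\<dots> = real (\<Sum>e\<in>H. card (e \<inter> S) * card (e - S)) / (real r - 1)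
      + real (\<Sum>e\<in>H. card (e \<inter> S) choose 2) / real (r choose 2)"
    unfolding w_def by (simp add: sum.distrib sum_divide_distrib)
  also have "\<dots> \<le> real (card S * (card V - card S)) / (real r - 1) + real (card S choose 2) / real (r choose 2)"
    using sum_card_cross_pairs_le[OF lu S] sum_card_inner_pairs_le[OF lu S] pos
    by (intro add_mono divide_right_mono of_nat_mono) simp_all
  finally show ?thesis by simp
qed

lemma mult_card_le_degree_threshold:
  assumes lu: "linear_uniform r U G" and maxdeg: "\<And>u. u \<in> U \<Longrightarrow> degree G u \<le> D"
  shows "r * card G \<le> (a - 1) * card U + D * card {u \<in> U. a \<le> degree G u}"
proof -
  define B where "B = {u \<in> U. a \<le> degree G u}"
  have U: "finite U" "B \<subseteq> U" using linear_uniformD(1)[OF lu] unfolding B_def by auto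
  have "r * card G = (\<Sum>u\<in>U. degree G u)" using sum_degree[OF lu] by simp
  also have "\<dots> \<le> (\<Sum>u\<in>U. (a - 1) + (if u \<in> B then D else 0))"
    using maxdeg unfolding B_def by (intro sum_mono) (fastforce simp: not_le trans_le_add2)
  also have "\<dots> = (a - 1) * card U + D * card B"
    using U by (simp add: sum.distrib sum.If_cases Int_absorb1)
  finally show ?thesis unfolding B_def .
qed

lemma card_le_meeting_plus_avoiding:
  assumes lu: "linear_uniform r V H" and r: "r \<ge> 2" and S: "S \<subseteq> V"
    and low: "\<And>u. u \<in> V - S \<Longrightarrow> degree {e \<in> H. e \<inter> S = {}} u \<le> D"
    and sparse: "card {u \<in> V - S. a \<le> degree {e \<in> H. e \<inter> S = {}} u} \<le> m"
  shows "real (card H) \<le> real (card S) * real (card V - card S) / (real r - 1)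
      + real (card S choose 2) / real (r choose 2)
      + (real (a - 1) * real (card V - card S) + real (D * m)) / real r"
proof -
  define G where "G = {e \<in> H. e \<inter> S = {}}"
  note H = linear_uniformD[OF lu]
  have "linear_uniform r (V - S) G" using lu unfolding linear_uniform_def G_def by auto
  from mult_card_le_degree_threshold[OF this low[folded G_def]]
  have "r * card G \<le> (a - 1) * card (V - S) + D * card {u \<in> V - S. a \<le> degree G u}" .
  also have "\<dots> \<le> (a - 1) * card (V - S) + D * m"
    using mult_le_mono2[OF sparse[folded G_def], of D] by (rule add_left_mono)
  also have "\<dots> = (a - 1) * (card V - card S) + D * m"
    using H(1) S by (simp add: card_Diff_subset finite_subset)
  finally have "real (r * card G) \<le> real ((a - 1) * (card V - card S) + D * m)"
    by (simp only: of_nat_le_iff)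
  then have "real r * real (card G) \<le> real (a - 1) * real (card V - card S) + real (D * m)"
    by simp
  then have "real (card G) \<le> (real (a - 1) * real (card V - card S) + real (D * m)) / real r"
    using r by (simp add: pos_le_divide_eq mult.commute)
  moreover have "card ({e \<in> H. e \<inter> S \<noteq> {}} \<union> G) = card {e \<in> H. e \<inter> S \<noteq> {}} + card G"
    using H(2) unfolding G_def by (intro card_Un_disjoint) auto
  moreover have "{e \<in> H. e \<inter> S \<noteq> {}} \<union> G = H" unfolding G_def by blast
  ultimately show ?thesis
    using card_edges_meeting_le[OF lu r S] by simp
qed

text \<open>In the application \<open>a = |S|\<close>, \<open>\<delta> = j - 1 - |S|\<close> and \<open>b = d\<^sub>j - 1\<close>.\<close>

lemma star_forest_bound_real_ineq:
  fixes a \<delta> N b R X :: real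
  assumes "\<delta> = 0 \<or> \<delta> \<ge> 1" "a \<ge> 0" "b \<ge> 0" "X \<ge> 0" "R \<ge> 2" "N \<ge> 2 * a + \<delta> + b + X"
  shows "a * (N - a) / (R - 1) + a * (a - 1) / (R * (R - 1)) + (b * (N - a) + X * \<delta>) / R
     \<le> (b / R + (a + \<delta>) / (R - 1)) * (N - (a + \<delta>)) + (a + \<delta>) * (a + \<delta> - 1) / (R * (R - 1))"
proof -
  have R: "R > 0" "R - 1 > 0" using assms by auto
  have diff: "((b / R + (a + \<delta>) / (R - 1)) * (N - (a + \<delta>)) + (a + \<delta>) * (a + \<delta> - 1) / (R * (R - 1)))
     - (a * (N - a) / (R - 1) + a * (a - 1) / (R * (R - 1)) + (b * (N - a) + X * \<delta>) / R)
     = \<delta> * (((N - 2 * a - \<delta>) / (R - 1) - (b + X) / R) + (2 * a + \<delta> - 1) / (R * (R - 1)))"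
    unfolding divide_inverse by (simp add: inverse_mult_distrib algebra_simps)
  have "0 \<le> \<delta> * (((N - 2 * a - \<delta>) / (R - 1) - (b + X) / R) + (2 * a + \<delta> - 1) / (R * (R - 1)))"
  proof (cases "\<delta> = 0")
    case False
    then have "\<delta> \<ge> 1" using assms(1) by simp
    have "(b + X) / R \<le> (N - 2 * a - \<delta>) / (R - 1)"
      using R assms by (intro order_trans[OF divide_left_mono divide_right_mono]) auto
    moreover have "0 \<le> (2 * a + \<delta> - 1) / (R * (R - 1))"
      using \<open>\<delta> \<ge> 1\<close> assms R by (auto intro!: divide_nonneg_pos)
    ultimately show ?thesis using \<open>\<delta> \<ge> 1\<close> by (auto intro!: mult_nonneg_nonneg)
  qed simp
  then show ?thesis using diff by linarith
qed

lemma star_forest_bound_ineq: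
  fixes n s j dj X r :: nat
  assumes "s < j" "1 \<le> dj" "2 \<le> r" "2 * s + (j - s - 1) + (dj - 1) + X \<le> n"
  shows "real s * real (n - s) / (real r - 1) + real (s choose 2) / real (r choose 2)
      + (real (dj - 1) * real (n - s) + real (X * (j - s - 1))) / real r
    \<le> ((real dj - 1) / real r + (real j - 1) / (real r - 1)) * (real n - real j + 1)
      + real ((j - 1) choose 2) / real (r choose 2)"
proof -
  have j: "real s + real (j - s - 1) = real j - 1" using assms(1) by simp
  have "real (j - s - 1) = 0 \<or> real (j - s - 1) \<ge> 1" by (cases "j - s - 1") auto
  moreover have "real n \<ge> 2 * real s + real (j - s - 1) + real (dj - 1) + real X"
    using assms(4) by (metis of_nat_add of_nat_le_iff of_nat_mult of_nat_numeral)
  ultimately have "real s * (real n - real s) / (real r - 1) + real s * (real s - 1) / (real r * (real r - 1))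
      + (real (dj - 1) * (real n - real s) + real X * real (j - s - 1)) / real r
    \<le> (real (dj - 1) / real r + (real j - 1) / (real r - 1)) * (real n - (real j - 1))
      + (real j - 1) * (real j - 1 - 1) / (real r * (real r - 1))"
    using star_forest_bound_real_ineq[of "real (j - s - 1)" "real s" "real (dj - 1)" "real X" "real r" "real n"]
      assms(3) unfolding j by simp
  moreover have "real (s choose 2) / real (r choose 2) = real s * (real s - 1) / (real r * (real r - 1))"
    "real ((j - 1) choose 2) / real (r choose 2) = (real j - 1) * (real j - 1 - 1) / (real r * (real r - 1))"
    using assms(1) by (simp_all add: of_nat_choose_two of_nat_diff)
  moreover have "real (n - s) = real n - real s" "real (dj - 1) = real dj - 1"
    using assms by (simp_all add: of_nat_diff)
  ultimately show ?thesis unfolding of_nat_mult by (simp add: algebra_simps)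
qed

lemma card_le_if_no_star_packing:
  assumes r: "r \<ge> 2" and lu: "linear_uniform r V H"
    and dpos: "\<And>i. 1 \<le> i \<Longrightarrow> i \<le> k \<Longrightarrow> d i \<ge> 1"
    and dM: "\<And>i. i \<in> {1..k} \<Longrightarrow> d i \<le> M" and D: "k + k * (1 + M * r) + M \<le> D"
    and big: "2 * k + M + D * ((1 + M * r) * (1 + D * r)) \<le> card V"
    and no_packing: "\<not> (\<exists>c S. star_packing H d {1..k} c S)"
  shows "\<exists>j\<in>{1..k}. real (card H) \<le> ((real (d j) - 1) / real r + (real j - 1) / (real r - 1))
                        * (real (card V) - real j + 1) + real ((j - 1) choose 2) / real (r choose 2)"
proof -
  note H = linear_uniformD[OF lu]
  define K where "K = (1 + M * r) * (1 + D * r)"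
  define S where "S = {v \<in> V. D \<le> degree H v}"
  define G where "G = {e \<in> H. e \<inter> S = {}}"
  have "S \<subseteq> V" "finite S" unfolding S_def using H(1) by auto
  have high: "k + k * (1 + M * r) + M \<le> degree H v" if "v \<in> S" for v
    using that D unfolding S_def by auto
  have "card S < k"
    using card_high_degree_less[OF lu \<open>finite S\<close> high dpos dM no_packing] .
  have "\<not> (\<exists>c S'. star_packing G d {card S + 1..k} c S')"
    using no_star_packing_avoiding_high_degree[OF lu \<open>finite S\<close> \<open>card S < k\<close> high dpos dM no_packing]
    unfolding G_def .
  moreover have maxdeg: "degree G u \<le> D" if "u \<in> V - S" for u
    using degree_mono[OF H(2), of G u] that unfolding G_def S_def by auto
  moreover have "linear_uniform r (V - S) G" using lu unfolding linear_uniform_def G_def by auto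
  moreover have "\<And>i. i \<in> {card S + 1..k} \<Longrightarrow> d i \<le> M" using dM by auto
  ultimately have "\<not> (\<forall>j\<in>{card S + 1..k}. (j - card S - 1) * K < card {u \<in> V - S. d j \<le> degree G u})"
    using star_packing_greedy unfolding K_def by blast
  then obtain j where j: "j \<in> {card S + 1..k}"
    and sparse: "card {u \<in> V - S. d j \<le> degree G u} \<le> (j - card S - 1) * K"
    by (auto simp: not_less)
  have "real (card H) \<le> real (card S) * real (card V - card S) / (real r - 1)
      + real (card S choose 2) / real (r choose 2)
      + (real (d j - 1) * real (card V - card S) + real (D * K * (j - card S - 1))) / real r"
    using card_le_meeting_plus_avoiding[OF lu r \<open>S \<subseteq> V\<close> maxdeg[unfolded G_def] sparse[unfolded G_def]]
    by (simp add: ac_simps)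
  also have "\<dots> \<le> ((real (d j) - 1) / real r + (real j - 1) / (real r - 1)) * (real (card V) - real j + 1)
      + real ((j - 1) choose 2) / real (r choose 2)"
    using j \<open>card S < k\<close> dM[of j] dpos[of j] big r unfolding K_def
    by (intro star_forest_bound_ineq) auto
  finally show ?thesis using j by auto
qed

section \<open>A construction from lines over a prime field\<close>

lemma eq_if_int_dvd_diff:
  fixes x y p :: nat
  assumes "int p dvd int x - int y" and "x < p" and "y < p"
  shows "x = y"
proof -
  have "int x mod int p = int y mod int p" using assms(1) by (simp add: mod_eq_dvd_iff)
  then have "x mod p = y mod p" by (simp flip: of_nat_mod)
  then show ?thesis using assms(2,3) by simp
qed

lemma parallel_lines_mod_eq:
  fixes p a a' b t :: nat
  assumes "a < p" "a' < p" and "(a + t * b) mod p = (a' + t * b) mod p"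
  shows "a = a'"
proof -
  have "int p dvd (int a + int t * int b) - (int a' + int t * int b)"
    using assms(3) by (metis mod_eq_dvd_iff of_nat_add of_nat_mult zmod_int)
  then show ?thesis using assms(1,2) eq_if_int_dvd_diff by simp
qed

lemma crossing_lines_mod_prime_eq:
  fixes p a a' b b' t t' :: nat
  assumes p: "prime p" and lt: "a < p" "a' < p" "b < p" "b' < p" "t < p" "t' < p" "t \<noteq> t'"
    and e: "(a + t * b) mod p = (a' + t * b') mod p" "(a + t' * b) mod p = (a' + t' * b') mod p"
  shows "a = a' \<and> b = b'"
proof -
  have d: "int p dvd (int a + int t * int b) - (int a' + int t * int b')"
    "int p dvd (int a + int t' * int b) - (int a' + int t' * int b')"
    using e by (metis mod_eq_dvd_iff of_nat_add of_nat_mult zmod_int)+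
  have "(int a + int t * int b - (int a' + int t * int b')) - (int a + int t' * int b - (int a' + int t' * int b'))
     = (int t - int t') * (int b - int b')" by (simp add: algebra_simps)
  then have "int p dvd (int t - int t') * (int b - int b')" using dvd_diff[OF d] by simp
  moreover have "\<not> int p dvd int t - int t'" using eq_if_int_dvd_diff lt by blast
  ultimately have "int p dvd int b - int b'" using p by (simp add: prime_dvd_mult_iff)
  then have "b = b'" using eq_if_int_dvd_diff lt by blast
  then show ?thesis using parallel_lines_mod_eq[OF lt(1,2)] e(1) by blast
qed

text \<open>
  The vertices are \<open>q\<close> apexes \<open>Inl h\<close> and, in each of \<open>Z\<close> disjoint copies of the grid
  \<open>{0..<r(r-1)} \<times> \<int>\<^sub>p\<close>, the points \<open>Inr (z, t, y)\<close>. The edge with parameters \<open>(b, a, z, c)\<close>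
  is the \<open>c\<close>-th block of consecutive columns of the line \<open>y = a + b t\<close> in copy \<open>z\<close>:
  for a slope \<open>b < q\<close> the block has \<open>r - 1\<close> points and is completed by the apex \<open>Inl b\<close>,
  for \<open>q \<le> b < q + L\<close> it has \<open>r\<close> points.
\<close>

type_synonym grid_vertex = "nat + nat \<times> nat \<times> nat"

definition grid_point :: "nat \<Rightarrow> nat \<Rightarrow> nat \<Rightarrow> nat \<Rightarrow> nat \<Rightarrow> grid_vertex" where
  "grid_point p b a z t = Inr (z, t, (a + t * b) mod p)"

definition line_block :: "nat \<Rightarrow> nat \<Rightarrow> nat \<Rightarrow> nat \<Rightarrow> nat \<Rightarrow> nat \<Rightarrow> grid_vertex set" where
  "line_block p b a z w c = grid_point p b a z ` {c * w ..< c * w + w}"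

lemma grid_point_eq_iff:
  "grid_point p b a z t = grid_point p b' a' z' t' \<longleftrightarrow>
     z = z' \<and> t = t' \<and> (a + t * b) mod p = (a' + t' * b') mod p"
  unfolding grid_point_def by auto

lemma Inl_notin_line_block: "Inl h \<notin> line_block p b a z w c"
  unfolding line_block_def grid_point_def by auto

lemma finite_line_block [simp]: "finite (line_block p b a z w c)"
  unfolding line_block_def by simp

lemma card_line_block: "card (line_block p b a z w c) = w"
proof -
  have "inj_on (grid_point p b a z) {c * w ..< c * w + w}"
    by (rule inj_onI) (simp add: grid_point_eq_iff)
  then show ?thesis unfolding line_block_def by (simp add: card_image)
qed

lemma line_blocks_parallel:
  assumes "x \<in> line_block p b a z w c" "x \<in> line_block p b a' z' w c'" and "a < p" "a' < p"
  shows "a = a' \<and> z = z' \<and> c = c'"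
proof -
  obtain t t' where t: "t \<in> {c * w ..< c * w + w}" "t' \<in> {c' * w ..< c' * w + w}"
    and x: "x = grid_point p b a z t" "x = grid_point p b a' z' t'"
    using assms(1,2) unfolding line_block_def by blast
  then have "z = z'" "t = t'" "(a + t * b) mod p = (a' + t * b) mod p"
    using grid_point_eq_iff by auto
  moreover have "t div w = c" "t' div w = c'"
    using t by (auto intro!: div_nat_eqI simp: mult.commute)
  then have "c = c'" using \<open>t = t'\<close> by simp
  ultimately show ?thesis using parallel_lines_mod_eq[OF assms(3,4)] by blast
qed

lemma line_blocks_crossing:
  assumes "prime p" and "a < p" "a' < p" "b < p" "b' < p" and "c * w + w \<le> p" "c' * w' + w' \<le> p"
    and "x \<in> line_block p b a z w c" "x \<in> line_block p b' a' z' w' c'"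
    and "y \<in> line_block p b a z w c" "y \<in> line_block p b' a' z' w' c'" and "x \<noteq> y"
  shows "b = b' \<and> a = a' \<and> z = z'"
proof -
  obtain t t' where t: "t < p" "x = grid_point p b a z t" "x = grid_point p b' a' z' t"
    using assms(6,8,9) unfolding line_block_def by (auto simp: grid_point_eq_iff)
  obtain s where s: "s < p" "y = grid_point p b a z s" "y = grid_point p b' a' z' s"
    using assms(6,10,11) unfolding line_block_def by (auto simp: grid_point_eq_iff)
  have "t \<noteq> s" using t s assms(12) by auto
  moreover have "z = z'" "(a + t * b) mod p = (a' + t * b') mod p" "(a + s * b) mod p = (a' + s * b') mod p"
    using t s grid_point_eq_iff by auto
  ultimately show ?thesis
    using crossing_lines_mod_prime_eq[OF assms(1-5) t(1) s(1)] by blast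
qed

definition grid_edge :: "nat \<Rightarrow> nat \<Rightarrow> nat \<Rightarrow> nat \<Rightarrow> nat \<Rightarrow> nat \<Rightarrow> nat \<Rightarrow> grid_vertex set" where
  "grid_edge p q r b a z c =
     (if b < q then {Inl b} else {}) \<union> line_block p b a z (if b < q then r - 1 else r) c"

definition grid_params :: "nat \<Rightarrow> nat \<Rightarrow> nat \<Rightarrow> nat \<Rightarrow> nat \<Rightarrow> (nat \<times> nat \<times> nat \<times> nat) set" where
  "grid_params p q L Z r =
     {(b, a, z, c). b < q + L \<and> a < p \<and> z < Z \<and> c < (if b < q then r else r - 1)}"

definition grid_hypergraph :: "nat \<Rightarrow> nat \<Rightarrow> nat \<Rightarrow> nat \<Rightarrow> nat \<Rightarrow> grid_vertex set set" where
  "grid_hypergraph p q L Z r = (\<lambda>(b, a, z, c). grid_edge p q r b a z c) ` grid_params p q L Z r"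

definition grid_vertices :: "nat \<Rightarrow> nat \<Rightarrow> nat \<Rightarrow> nat \<Rightarrow> grid_vertex set" where
  "grid_vertices p q Z r = Inl ` {..<q} \<union> Inr ` ({..<Z} \<times> {..<r * (r - 1)} \<times> {..<p})"

lemma grid_hypergraph_memI:
  "(b, a, z, c) \<in> grid_params p q L Z r \<Longrightarrow> grid_edge p q r b a z c \<in> grid_hypergraph p q L Z r"
  unfolding grid_hypergraph_def by (rule image_eqI[where x = "(b, a, z, c)"]) simp_all

lemma finite_grid_hypergraph: "finite (grid_hypergraph p q L Z r)"
proof -
  have "grid_params p q L Z r \<subseteq> {..<q + L} \<times> {..<p} \<times> {..<Z} \<times> {..<r}"
    unfolding grid_params_def by (auto split: if_splits)
  then have "finite (grid_params p q L Z r)" by (rule finite_subset) simp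
  then show ?thesis unfolding grid_hypergraph_def by simp
qed

lemma grid_block_fits:
  fixes c r :: nat
  assumes "c < (if b < q then r else r - 1)"
  shows "c * (if b < q then r - 1 else r) + (if b < q then r - 1 else r) \<le> r * (r - 1)"
proof (cases "b < q")
  case True
  then have "Suc c * (r - 1) \<le> r * (r - 1)" using assms by (intro mult_le_mono1) simp
  then show ?thesis using True by simp
next
  case False
  then have "Suc c * r \<le> (r - 1) * r" using assms by (intro mult_le_mono1) simp
  then show ?thesis using False by (simp add: mult.commute)
qed

lemma grid_edge_subset:
  assumes "(b, a, z, c) \<in> grid_params p q L Z r" and "p > 0"
  shows "grid_edge p q r b a z c \<subseteq> grid_vertices p q Z r"
proof -
  have "line_block p b a z (if b < q then r - 1 else r) c \<subseteq> Inr ` ({..<Z} \<times> {..<r * (r - 1)} \<times> {..<p})"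
    using assms grid_block_fits[of c b q r]
    unfolding line_block_def grid_point_def grid_params_def by auto
  then show ?thesis using assms(1) unfolding grid_edge_def grid_vertices_def grid_params_def by auto
qed

lemma finite_grid_edge: "finite (grid_edge p q r b a z c)"
  unfolding grid_edge_def by simp

lemma card_grid_edge:
  assumes "r \<ge> 1"
  shows "card (grid_edge p q r b a z c) = r"
  using assms unfolding grid_edge_def
  by (cases "b < q") (simp_all add: card_line_block Inl_notin_line_block)

lemma grid_edge_params_eq:
  assumes p: "prime p" and bounds: "r * (r - 1) \<le> p" "q + L \<le> p"
    and P: "(b, a, z, c) \<in> grid_params p q L Z r" "(b', a', z', c') \<in> grid_params p q L Z r"
    and x: "x \<in> grid_edge p q r b a z c" "x \<in> grid_edge p q r b' a' z' c'"
    and y: "y \<in> grid_edge p q r b a z c" "y \<in> grid_edge p q r b' a' z' c'" and "x \<noteq> y"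
  shows "(b, a, z, c) = (b', a', z', c')"
proof -
  define w where "w \<beta> = (if \<beta> < q then r - 1 else r)" for \<beta>
  define B where "B = line_block p b a z (w b) c"
  define B' where "B' = line_block p b' a' z' (w b') c'"
  have E: "grid_edge p q r b a z c = (if b < q then {Inl b} else {}) \<union> B"
    "grid_edge p q r b' a' z' c' = (if b' < q then {Inl b'} else {}) \<union> B'"
    unfolding grid_edge_def B_def B'_def w_def by simp_all
  have lt: "a < p" "a' < p" "b < p" "b' < p" using P bounds unfolding grid_params_def by auto
  have fits: "c * w b + w b \<le> p" "c' * w b' + w b' \<le> p"
    using P grid_block_fits[of c b q r] grid_block_fits[of c' b' q r] bounds(1)
    unfolding grid_params_def w_def by auto
  have Inl: "Inl h \<notin> B" "Inl h \<notin> B'" for h unfolding B_def B'_def by (simp_all add: Inl_notin_line_block)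
  show ?thesis
  proof (cases "b = b'")
    case True
    then have "x \<in> B \<and> x \<in> B' \<or> y \<in> B \<and> y \<in> B'"
      using x y \<open>x \<noteq> y\<close> unfolding E by (auto split: if_splits)
    then show ?thesis
      using line_blocks_parallel[OF _ _ lt(1,2)] True unfolding B_def B'_def by blast
  next
    case False
    then have "x \<in> B" "x \<in> B'" "y \<in> B" "y \<in> B'"
      using x y Inl unfolding E by (auto split: if_splits)
    then have "b = b'"
      using line_blocks_crossing[OF p lt fits] \<open>x \<noteq> y\<close> unfolding B_def B'_def by blast
    with False show ?thesis by simp
  qed
qed

lemma grid_hypergraph_linear_uniform:
  assumes p: "prime p" and r: "r \<ge> 2" and bounds: "r * (r - 1) \<le> p" "q + L \<le> p"
  shows "linear_uniform r (grid_vertices p q Z r) (grid_hypergraph p q L Z r)"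
  unfolding linear_uniform_def
proof (intro conjI ballI impI)
  show "finite (grid_vertices p q Z r)" unfolding grid_vertices_def by simp
  fix e assume "e \<in> grid_hypergraph p q L Z r"
  then obtain b a z c where "(b, a, z, c) \<in> grid_params p q L Z r" "e = grid_edge p q r b a z c"
    unfolding grid_hypergraph_def by auto
  then show "e \<subseteq> grid_vertices p q Z r" "card e = r"
    using grid_edge_subset prime_gt_0_nat[OF p] card_grid_edge r by auto
next
  fix e e' assume e: "e \<in> grid_hypergraph p q L Z r" and e': "e' \<in> grid_hypergraph p q L Z r" and "e \<noteq> e'"
  obtain b a z c where P: "(b, a, z, c) \<in> grid_params p q L Z r" "e = grid_edge p q r b a z c"
    using e unfolding grid_hypergraph_def by auto
  obtain b' a' z' c' where P': "(b', a', z', c') \<in> grid_params p q L Z r" "e' = grid_edge p q r b' a' z' c'"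
    using e' unfolding grid_hypergraph_def by auto
  have "x = y" if "x \<in> e \<inter> e'" "y \<in> e \<inter> e'" for x y
    using grid_edge_params_eq[OF p bounds P(1) P'(1), of x y] that \<open>e \<noteq> e'\<close> P(2) P'(2) by auto
  moreover have "finite (e \<inter> e')"
    unfolding P(2) grid_edge_def by simp
  ultimately show "card (e \<inter> e') \<le> 1" by (simp add: card_le_Suc0_iff_eq)
qed

lemma card_grid_params: "card (grid_params p q L Z r) = q * p * Z * r + L * p * Z * (r - 1)"
proof -
  have "grid_params p q L Z r = (SIGMA b:{0..<q + L}. {..<p} \<times> {..<Z} \<times> {..<(if b < q then r else r - 1)})"
    unfolding grid_params_def by auto
  then have "card (grid_params p q L Z r) = (\<Sum>b\<in>{0..<q + L}. p * Z * (if b < q then r else r - 1))"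
    by (simp add: card_cartesian_product mult.assoc)
  also have "\<dots> = (\<Sum>b\<in>{0..<q}. p * Z * r) + (\<Sum>b\<in>{q..<q + L}. p * Z * (r - 1))"
    by (simp add: sum.atLeastLessThan_concat[symmetric, of 0 q "q + L"])
  finally show ?thesis by simp
qed

lemma card_grid_hypergraph:
  assumes p: "prime p" and r: "r \<ge> 2" and bounds: "r * (r - 1) \<le> p" "q + L \<le> p"
  shows "card (grid_hypergraph p q L Z r) = q * p * Z * r + L * p * Z * (r - 1)"
proof -
  have "inj_on (\<lambda>(b, a, z, c). grid_edge p q r b a z c) (grid_params p q L Z r)"
  proof (rule inj_onI)
    fix X Y assume X: "X \<in> grid_params p q L Z r" and Y: "Y \<in> grid_params p q L Z r"
      and eq: "(\<lambda>(b, a, z, c). grid_edge p q r b a z c) X = (\<lambda>(b, a, z, c). grid_edge p q r b a z c) Y"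
    obtain b a z c b' a' z' c' where XY: "X = (b, a, z, c)" "Y = (b', a', z', c')"
      by (cases X, cases Y) auto
    have "\<not> card (grid_edge p q r b a z c) \<le> 1" using card_grid_edge r by simp
    then obtain x y where "x \<in> grid_edge p q r b a z c" "y \<in> grid_edge p q r b a z c" "x \<noteq> y"
      unfolding card_le_Suc0_iff_eq[OF finite_grid_edge] One_nat_def by blast
    then show "X = Y"
      using grid_edge_params_eq[OF p bounds X[unfolded XY] Y[unfolded XY]] eq unfolding XY by auto
  qed
  then show ?thesis unfolding grid_hypergraph_def by (simp add: card_image card_grid_params)
qed

lemma real_card_grid_hypergraph:
  assumes p: "prime p" and r: "r \<ge> 2" and bounds: "r * (r - 1) \<le> p" "q + L \<le> p"
  shows "real (card (grid_hypergraph p q L Z r))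
    = (real L / real r + real q / (real r - 1)) * (real Z * real (r * (r - 1)) * real p)"
proof -
  have "real (card (grid_hypergraph p q L Z r))
      = (real q * real r + real L * (real r - 1)) * (real Z * real p)"
    using r unfolding card_grid_hypergraph[OF p r bounds] of_nat_add of_nat_mult
    by (simp add: of_nat_diff algebra_simps)
  also have "real q * real r + real L * (real r - 1)
      = (real L / real r + real q / (real r - 1)) * real (r * (r - 1))"
    using r by (simp add: of_nat_diff field_simps)
  finally show ?thesis by (simp add: ac_simps)
qed

lemma card_grid_vertices: "card (grid_vertices p q Z r) = q + Z * (r * (r - 1)) * p"
  unfolding grid_vertices_def
  by (subst card_Un_disjoint) (auto simp: card_image card_cartesian_product)

lemma card_grid_edges_avoiding_apexes:
  assumes p: "prime p" and bounds: "r * (r - 1) \<le> p" "q + L \<le> p" and u: "u \<notin> Inl ` {..<q}"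
  shows "card {e \<in> grid_hypergraph p q L Z r. u \<in> e \<and> e \<inter> Inl ` {..<q} = {}} \<le> L"
proof -
  define E where "E b = {grid_edge p q r b a z c | a z c.
      (b, a, z, c) \<in> grid_params p q L Z r \<and> u \<in> grid_edge p q r b a z c}" for b
  have "E b \<subseteq> grid_hypergraph p q L Z r" for b unfolding E_def by (auto intro: grid_hypergraph_memI)
  then have finite_E: "finite (E b)" for b using finite_grid_hypergraph by (rule finite_subset)
  have card_E: "card (E b) \<le> 1" for b
  proof -
    have "e = e'" if e: "e \<in> E b" "e' \<in> E b" for e e'
    proof -
      obtain a z c where P: "(b, a, z, c) \<in> grid_params p q L Z r" "e = grid_edge p q r b a z c" "u \<in> e"
        using e(1) unfolding E_def by auto
      obtain a' z' c' where P': "(b, a', z', c') \<in> grid_params p q L Z r" "e' = grid_edge p q r b a' z' c'" "u \<in> e'"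
        using e(2) unfolding E_def by auto
      have "u \<in> line_block p b a z (if b < q then r - 1 else r) c"
        "u \<in> line_block p b a' z' (if b < q then r - 1 else r) c'"
        using P(2,3) P'(2,3) u unfolding grid_edge_def by (auto split: if_splits)
      moreover have "a < p" "a' < p" using P(1) P'(1) unfolding grid_params_def by auto
      ultimately have "a = a' \<and> z = z' \<and> c = c'" by (rule line_blocks_parallel)
      then show ?thesis using P(2) P'(2) by simp
    qed
    then show ?thesis using finite_E[of b] by (simp add: card_le_Suc0_iff_eq)
  qed
  have "{e \<in> grid_hypergraph p q L Z r. u \<in> e \<and> e \<inter> Inl ` {..<q} = {}} \<subseteq> (\<Union>b\<in>{q..<q + L}. E b)"
  proof
    fix e assume e: "e \<in> {e \<in> grid_hypergraph p q L Z r. u \<in> e \<and> e \<inter> Inl ` {..<q} = {}}"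
    then obtain b a z c where P: "(b, a, z, c) \<in> grid_params p q L Z r" "e = grid_edge p q r b a z c"
      unfolding grid_hypergraph_def by auto
    then have "\<not> b < q" using e unfolding grid_edge_def by auto
    then show "e \<in> (\<Union>b\<in>{q..<q + L}. E b)" using P e unfolding E_def grid_params_def by auto
  qed
  then have "card {e \<in> grid_hypergraph p q L Z r. u \<in> e \<and> e \<inter> Inl ` {..<q} = {}}
      \<le> card (\<Union>b\<in>{q..<q + L}. E b)"
    using finite_E by (intro card_mono) auto
  also have "\<dots> \<le> (\<Sum>b\<in>{q..<q + L}. card (E b))" by (rule card_UN_le) simp
  also have "\<dots> \<le> (\<Sum>b\<in>{q..<q + L}. 1)" using card_E by (rule sum_mono)
  finally show ?thesis by simp
qed

lemma grid_hypergraph_star_forest_free: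
  assumes p: "prime p" and r: "r \<ge> 2" and bounds: "r * (r - 1) \<le> p" "(i0 - 1) + (d i0 - 1) \<le> p"
    and i0: "i0 \<in> {1..k}"
    and dpos: "\<And>i. 1 \<le> i \<Longrightarrow> i \<le> k \<Longrightarrow> d i \<ge> 1"
    and dmono: "\<And>i j. 1 \<le> i \<Longrightarrow> i \<le> j \<Longrightarrow> j \<le> k \<Longrightarrow> d j \<le> d i"
  shows "\<not> contains_copy (grid_hypergraph p (i0 - 1) (d i0 - 1) Z r) (star_forest_plus r k d)"
proof
  assume "contains_copy (grid_hypergraph p (i0 - 1) (d i0 - 1) Z r) (star_forest_plus r k d)"
  then obtain c S where ps: "star_packing (grid_hypergraph p (i0 - 1) (d i0 - 1) Z r) d {1..k} c S"
    using contains_copy_imp_star_packing[where d = d and k = k, OF r _ dpos] by blast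
  have low: "card {e \<in> grid_hypergraph p (i0 - 1) (d i0 - 1) Z r. u \<in> e \<and> e \<inter> Inl ` {..<i0 - 1} = {}} < d i0"
    if "u \<notin> Inl ` {..<i0 - 1}" for u
    using card_grid_edges_avoiding_apexes[OF p bounds that, of Z] dpos[of i0] i0 by simp
  have "card (Inl ` {..<i0 - 1} :: grid_vertex set) < i0"
    using i0 by (simp add: card_image)
  then have "\<not> star_packing (grid_hypergraph p (i0 - 1) (d i0 - 1) Z r) d {1..k} c S"
    using i0 by (intro no_star_packing_small_cover[where d = d and k = k, OF finite_grid_hypergraph _ _ _ dmono low])
      auto
  then show False using ps by contradiction
qed

section \<open>The linear Turan number\<close>

lemma linear_uniform_image:
  assumes lu: "linear_uniform r V H" and inj: "inj_on \<phi> V" and "\<phi> ` V \<subseteq> W" and "finite W"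
  shows "linear_uniform r W ((`) \<phi> ` H)"
  unfolding linear_uniform_def
proof (intro conjI ballI impI)
  note H = linear_uniformD[OF lu]
  show "finite W" by fact
  fix E assume "E \<in> (`) \<phi> ` H"
  then obtain e where e: "e \<in> H" "E = \<phi> ` e" by blast
  show "E \<subseteq> W" using e H(3) assms(3) by blast
  show "card E = r" using e H(3,4) inj by (simp add: card_image inj_on_subset)
next
  note H = linear_uniformD[OF lu]
  fix E E' assume "E \<in> (`) \<phi> ` H" "E' \<in> (`) \<phi> ` H" "E \<noteq> E'"
  then obtain e e' where e: "e \<in> H" "e' \<in> H" "E = \<phi> ` e" "E' = \<phi> ` e'" "e \<noteq> e'" by blast
  then have "E \<inter> E' = \<phi> ` (e \<inter> e')" using inj_on_image_Int[OF inj H(3) H(3)] by simp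
  then have "card (E \<inter> E') \<le> card (e \<inter> e')" by (simp add: card_image_le H(5) e(1))
  also have "\<dots> \<le> 1" using lu e unfolding linear_uniform_def by blast
  finally show "card (E \<inter> E') \<le> 1" .
qed

lemma contains_copy_image_edges:
  assumes inj: "inj_on \<phi> (\<Union>H)" and "contains_copy ((`) \<phi> ` H) F"
  shows "contains_copy H F"
proof -
  obtain f where f: "inj_on f (\<Union>F)" "\<And>e. e \<in> F \<Longrightarrow> f ` e \<in> (`) \<phi> ` H"
    using assms(2) unfolding contains_copy_def by blast
  define g where "g = inv_into (\<Union>H) \<phi> \<circ> f"
  have "g ` e \<in> H" if e: "e \<in> F" for e
  proof -
    obtain e' where "e' \<in> H" "f ` e = \<phi> ` e'" using f(2)[OF e] by blast
    moreover have "inv_into (\<Union>H) \<phi> ` \<phi> ` e' = e'"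
      using inv_into_image_cancel[OF inj] \<open>e' \<in> H\<close> by blast
    ultimately show ?thesis unfolding g_def image_comp[symmetric] by simp
  qed
  moreover have "f ` \<Union>F \<subseteq> \<phi> ` \<Union>H" using f(2) by blast
  then have "inj_on g (\<Union>F)"
    unfolding g_def using f(1) inj_on_inv_into[OF order_refl] by (blast intro: comp_inj_on inj_on_subset)
  ultimately show ?thesis unfolding contains_copy_def by blast
qed

lemma finite_ex_lin_set:
  "finite {card H | H :: nat set set. linear_uniform r {..<n} H \<and> \<not> contains_copy H F}"
proof -
  have "{card H | H :: nat set set. linear_uniform r {..<n} H \<and> \<not> contains_copy H F}
      \<subseteq> card ` Pow (Pow {..<n})"
    unfolding linear_uniform_def by auto
  then show ?thesis by (rule finite_subset) simp
qed

lemma card_le_ex_lin: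
  fixes H :: "'a set set"
  assumes lu: "linear_uniform r V H" and "card V \<le> n" and free: "\<not> contains_copy H F"
  shows "card H \<le> ex_lin r n F"
proof -
  note L = linear_uniformD[OF lu]
  obtain \<phi> :: "'a \<Rightarrow> nat" where \<phi>: "inj_on \<phi> V" "\<phi> ` V \<subseteq> {..<n}"
    using card_le_inj[OF L(1), of "{..<n}"] \<open>card V \<le> n\<close> by auto
  have inj: "inj_on \<phi> (\<Union>H)" using \<phi>(1) L(3) by (blast intro: inj_on_subset)
  have "linear_uniform r {..<n} ((`) \<phi> ` H)" using linear_uniform_image[OF lu \<phi>] by simp
  moreover have "\<not> contains_copy ((`) \<phi> ` H) F" using contains_copy_image_edges[OF inj] free by blast
  ultimately have "card ((`) \<phi> ` H) \<le> ex_lin r n F"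
    unfolding ex_lin_def by (intro Max_ge[OF finite_ex_lin_set]) blast
  then show ?thesis using card_image[OF inj_on_image[OF inj]] by simp
qed

lemma ex_lin_attained:
  assumes "F \<noteq> {}"
  obtains H :: "nat set set" where "linear_uniform r {..<n} H" "\<not> contains_copy H F" "ex_lin r n F = card H"
proof -
  have "linear_uniform r {..<n} {}" unfolding linear_uniform_def by simp
  moreover have "\<not> contains_copy {} F" using assms unfolding contains_copy_def by blast
  ultimately have "{card H | H :: nat set set. linear_uniform r {..<n} H \<and> \<not> contains_copy H F} \<noteq> {}"
    by blast
  then have "ex_lin r n F \<in> {card H | H :: nat set set. linear_uniform r {..<n} H \<and> \<not> contains_copy H F}"
    unfolding ex_lin_def by (rule Max_in[OF finite_ex_lin_set])
  then show ?thesis using that by blast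
qed

lemma ex_lin_ge_grid_density:
  assumes p: "prime p" and r: "r \<ge> 2" and bounds: "r * (r - 1) \<le> p" "q + L \<le> p"
    and free: "\<And>Z. \<not> contains_copy (grid_hypergraph p q L Z r) F"
    and n: "q + r * (r - 1) * p \<le> n"
  shows "(real L / real r + real q / (real r - 1)) * (real n - real (q + r * (r - 1) * p))
    \<le> real (ex_lin r n F)"
proof -
  define R where "R = r * (r - 1) * p"
  define Z where "Z = (n - q) div R"
  have "R > 0" using r p prime_gt_0_nat unfolding R_def by simp
  then have "(n - q) mod R < R" by simp
  then have "Z * R \<le> n - q" "n - q < Z * R + R"
    unfolding Z_def using div_mult_mod_eq[of "n - q" R] by linarith+
  then have "card (grid_vertices p q Z r) \<le> n"
    using n unfolding card_grid_vertices R_def by (simp add: mult.assoc)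
  from card_le_ex_lin[OF grid_hypergraph_linear_uniform[OF p r bounds] this free]
  have "real (card (grid_hypergraph p q L Z r)) \<le> real (ex_lin r n F)" by simp
  moreover have "real (n - q) < real (Z * R + R)"
    using \<open>n - q < Z * R + R\<close> by (simp only: of_nat_less_iff)
  then have "real n - real (q + R) \<le> real Z * real R"
    using n unfolding R_def[symmetric] by (simp add: of_nat_diff algebra_simps)
  then have "real n - real (q + R) \<le> real Z * real (r * (r - 1)) * real p"
    unfolding R_def by (simp add: mult.assoc)
  moreover have "0 \<le> real L / real r + real q / (real r - 1)" using r by simp
  ultimately show ?thesis
    using real_card_grid_hypergraph[OF p r bounds, of Z] mult_left_mono unfolding R_def
    by (metis (no_types, lifting) order_trans)
qed

lemma ex_lin_lower_bound:
  assumes r: "r \<ge> 2" and i0: "i0 \<in> {1..k}"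
    and dpos: "\<And>i. 1 \<le> i \<Longrightarrow> i \<le> k \<Longrightarrow> d i \<ge> 1"
    and dmono: "\<And>i j. 1 \<le> i \<Longrightarrow> i \<le> j \<Longrightarrow> j \<le> k \<Longrightarrow> d j \<le> d i"
  shows "\<exists>C. \<forall>n\<ge>C. ((real (d i0) - 1) / real r + (real i0 - 1) / (real r - 1)) * (real n - real C)
            \<le> real (ex_lin r n (star_forest_plus r k d))"
proof -
  define q where "q = i0 - 1"
  define L where "L = d i0 - 1"
  obtain p where p: "prime p" "r * (r - 1) + q + L < p" using bigger_prime by blast
  have bounds: "r * (r - 1) \<le> p" "q + L \<le> p" using p(2) by auto
  have "real (d i0) - 1 = real L" "real i0 - 1 = real q"
    using dpos[of i0] i0 unfolding L_def q_def by (auto simp: of_nat_diff)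
  have "\<not> contains_copy (grid_hypergraph p q L Z r) (star_forest_plus r k d)" for Z
    using grid_hypergraph_star_forest_free[OF p(1) r, of i0 d k Z] bounds i0 dpos dmono
    unfolding q_def L_def by blast
  note density = ex_lin_ge_grid_density[OF p(1) r bounds this]
  show ?thesis
  proof (intro exI allI impI)
    fix n assume "q + r * (r - 1) * p \<le> n"
    then show "((real (d i0) - 1) / real r + (real i0 - 1) / (real r - 1)) * (real n - real (q + r * (r - 1) * p))
        \<le> real (ex_lin r n (star_forest_plus r k d))"
      using density \<open>real (d i0) - 1 = real L\<close> \<open>real i0 - 1 = real q\<close> by simp
  qed
qed

lemma ex_lin_upper_bound:
  assumes k: "k \<ge> 1" and r: "r \<ge> 2"
    and dpos: "\<And>i. 1 \<le> i \<Longrightarrow> i \<le> k \<Longrightarrow> d i \<ge> 1"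
    and dmono: "\<And>i j. 1 \<le> i \<Longrightarrow> i \<le> j \<Longrightarrow> j \<le> k \<Longrightarrow> d j \<le> d i"
  shows "\<exists>N. \<forall>n\<ge>N. real (ex_lin r n (star_forest_plus r k d)) \<le>
            Max ((\<lambda>i. ((real (d i) - 1) / real r + (real i - 1) / (real r - 1))
                        * (real n - real i + 1) + real ((i - 1) choose 2) / real (r choose 2)) ` {1..k})"
proof -
  define M where "M = d 1"
  define D where "D = k + k * (1 + M * r) + M"
  have "real (ex_lin r n (star_forest_plus r k d)) \<le>
      Max ((\<lambda>i. ((real (d i) - 1) / real r + (real i - 1) / (real r - 1))
               * (real n - real i + 1) + real ((i - 1) choose 2) / real (r choose 2)) ` {1..k})"
    if n: "2 * k + M + D * ((1 + M * r) * (1 + D * r)) \<le> n" for n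
  proof -
    have "star_forest_plus r k d \<noteq> {}"
      using k dpos[of 1] unfolding star_forest_plus_def by blast
    then obtain H where H: "linear_uniform r {..<n} H" "\<not> contains_copy H (star_forest_plus r k d)"
      "ex_lin r n (star_forest_plus r k d) = card H"
      by (rule ex_lin_attained)
    have dM: "\<And>i. i \<in> {1..k} \<Longrightarrow> d i \<le> M" unfolding M_def using dmono by auto
    have "\<not> (\<exists>c S. star_packing H d {1..k} c S)"
      using star_packing_imp_contains_copy[OF H(1) r] H(2) by blast
    then obtain j where "j \<in> {1..k}" "real (card H) \<le> ((real (d j) - 1) / real r + (real j - 1) / (real r - 1))
        * (real n - real j + 1) + real ((j - 1) choose 2) / real (r choose 2)"
      using card_le_if_no_star_packing[where k = k and d = d and M = M and D = D, OF r H(1) dpos dM] n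
      unfolding D_def by auto
    then show ?thesis using H(3) by (auto intro: order_trans[OF _ Max_ge])
  qed
  then show ?thesis by blast
qed

lemma LIMSEQ_div_real_sandwich:
  fixes x :: "nat \<Rightarrow> real"
  assumes lower: "\<forall>n\<ge>N. A * (real n - C) \<le> x n" and upper: "\<forall>n\<ge>N. x n \<le> A * real n + B"
  shows "(\<lambda>n. x n / real n) \<longlonglongrightarrow> A"
proof (rule tendsto_sandwich)
  have pos: "\<forall>\<^sub>F n in sequentially. N \<le> n \<and> 0 < real n"
    using eventually_ge_at_top[of "max N 1"] by (auto elim: eventually_mono)
  show "\<forall>\<^sub>F n in sequentially. A - A * C / real n \<le> x n / real n"
    using pos lower by (auto elim!: eventually_mono simp: field_simps)
  show "\<forall>\<^sub>F n in sequentially. x n / real n \<le> A + B / real n"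
    using pos upper by (auto elim!: eventually_mono simp: field_simps)
  show "(\<lambda>n. A - A * C / real n) \<longlonglongrightarrow> A"
    using tendsto_diff[OF tendsto_const lim_const_over_n[of "A * C"]] by simp
  show "(\<lambda>n. A + B / real n) \<longlonglongrightarrow> A"
    using tendsto_add[OF tendsto_const lim_const_over_n[of B]] by simp
qed

lemma Max_affine_le:
  fixes g h :: "nat \<Rightarrow> real"
  assumes "finite I" "I \<noteq> {}" and "\<And>i. i \<in> I \<Longrightarrow> 1 \<le> i \<and> 0 \<le> g i"
  shows "Max ((\<lambda>i. g i * (real n - real i + 1) + h i) ` I) \<le> Max (g ` I) * real n + Max (h ` I)"
proof -
  have "g i * (real n - real i + 1) + h i \<le> Max (g ` I) * real n + Max (h ` I)" if "i \<in> I" for i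
  proof -
    have "g i * (real n - real i + 1) \<le> g i * real n" using assms(3)[OF that] by (simp add: mult_left_mono)
    also have "\<dots> \<le> Max (g ` I) * real n" using assms(1) that by (simp add: mult_right_mono)
    finally show ?thesis using assms(1) that by (simp add: add_mono)
  qed
  then show ?thesis using assms(1,2) by simp
qed

theorem theorem1p7:
  fixes k r :: nat and d :: "nat \<Rightarrow> nat"
  assumes "k \<ge> 1" and "r \<ge> 2"
    and "\<And>i. 1 \<le> i \<Longrightarrow> i \<le> k \<Longrightarrow> d i \<ge> 1"
    and "\<And>i j. 1 \<le> i \<Longrightarrow> i \<le> j \<Longrightarrow> j \<le> k \<Longrightarrow> d j \<le> d i"
  shows "(\<exists>N. \<forall>n\<ge>N. real (ex_lin r n (star_forest_plus r k d)) \<le>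
            Max ((\<lambda>i. ((real (d i) - 1) / real r + (real i - 1) / (real r - 1))
                        * (real n - real i + 1)
                      + real ((i - 1) choose 2) / real (r choose 2)) ` {1..k}))
       \<and> ((\<lambda>n. real (ex_lin r n (star_forest_plus r k d)) / real n) \<longlonglongrightarrow>
            Max ((\<lambda>i. (real (d i) - 1) / real r + (real i - 1) / (real r - 1)) ` {1..k}))"
proof -
  define g where "g i = (real (d i) - 1) / real r + (real i - 1) / (real r - 1)" for i
  define h where "h i = real ((i - 1) choose 2) / real (r choose 2)" for i
  let ?ex = "\<lambda>n. real (ex_lin r n (star_forest_plus r k d))"
  have I: "finite {1..k}" "{1..k} \<noteq> {}" using assms(1) by auto
  obtain i0 where i0: "i0 \<in> {1..k}" "g i0 = Max (g ` {1..k})"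
    using Max_in[OF finite_imageI[OF I(1)]] I(2) by (metis empty_is_image imageE)
  obtain C where lower: "\<forall>n\<ge>C. g i0 * (real n - real C) \<le> ?ex n"
    using ex_lin_lower_bound[where d = d and k = k, OF assms(2) i0(1) assms(3,4)] unfolding g_def by blast
  obtain N where upper: "\<forall>n\<ge>N. ?ex n \<le> Max ((\<lambda>i. g i * (real n - real i + 1) + h i) ` {1..k})"
    using ex_lin_upper_bound[where d = d and k = k, OF assms] unfolding g_def h_def by blast
  have "g i \<ge> 0" if "i \<in> {1..k}" for i using assms(2,3) that unfolding g_def by auto
  then have "\<forall>n\<ge>N. ?ex n \<le> Max (g ` {1..k}) * real n + Max (h ` {1..k})"
    using upper Max_affine_le[OF I] by (meson atLeastAtMost_iff order_trans)
  then have "(\<lambda>n. ?ex n / real n) \<longlonglongrightarrow> Max (g ` {1..k})"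
    using lower i0(2) by (intro LIMSEQ_div_real_sandwich[of "max N C" _ "real C"]) auto
  then show ?thesis using upper unfolding g_def h_def by blast
qed

end
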